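(* Let $\{S^n\}_{n\in\mathbb{N}}$ be an exponentially regular, exponentially nearly additive $\mathbb{R}^h$-valued process with $\sup_{n\in\mathbb{N}}|\Lambda^n|^{-1}\log\mathbb{E}[\exp(\langle\lambda,S^n\rangle)]<\infty$ for all $\lambda\in\mathbb{R}^h$. Then $\{S^n/|\Lambda^n|\}_{n\in\mathbb{N}}$ is exponentially tight with speed $|\Lambda^n|$, and for every $f\in\mathscr{F}(\mathbb{R}^h)$ the limit $\lim_{n\to\infty}|\Lambda^n|^{-1}\Gamma_n(f)$ exists in $[-\infty,\infty)$.
   Context: Fix $d,h\in\mathbb{N}$, $|\Lambda^n|=(2n)^d$. Exponential near additivity and exponential regularity are as follows. Exponentially $r$-nearly additive: there exist $\{S^{n,z}\}_{n\in\mathbb{N},z\in\mathbb{Z}^d}$, with $\{S^{n,z}\}_z$ independent copies of $S^n$ for each $n$, such that for all $\varepsilon,C>0$ there is an integer $K>r$ with $P(\|S^{(2m+1)k}-\sum_{z\in\mathbb{Z}^d\cap[-m,m]^d}S^{k-r,z}\|>\varepsilon|\Lambda^{(2m+1)k}|)\le e^{-C|\Lambda^{(2m+1)k}|}$ for all $k\ge K$, $m\in\mathbb{N}$; exponentially nearly additive = this for some integer $r\ge0$. Exponentially regular: for each $k$, with $(2m_n+1)k\le n<(2m_n+3)k$, for all $\varepsilon,C>0$ there is $N$ with $P(\|S^n-S^{(2m_n+1)k}\|>\varepsilon|\Lambda^n|)\le e^{-C|\Lambda^n|}$ for $n\ge N$. Exponentially tight with speed $|\Lambda^n|$: for every $\alpha>0$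 there is a compact $K\subset\mathbb{R}^h$ with $\limsup_n|\Lambda^n|^{-1}\log P(S^n/|\Lambda^n|\notin K)\le-\alpha$. $\Gamma_n(f)=\log\mathbb{E}[\exp(|\Lambda^n|f(S^n/|\Lambda^n|))]\in(-\infty,\infty]$. $\mathscr{F}(\mathbb{R}^h)$ is the class of Lipschitz continuous concave real functions on $\mathbb{R}^h$. *)

theory Defs
  imports "HOL-Probability.Probability"
begin

text \<open>Volume of the box Lambda^n in dimension d: |Lambda^n| = (2n)^d.\<close>
definition lam :: "nat \<Rightarrow> nat \<Rightarrow> real" where
  "lam d n = real ((2 * n) ^ d)"

definition lnE :: "real \<Rightarrow> ereal" where
  "lnE p = (if p \<le> 0 then -\<infinity> else ereal (ln p))"

definition lnEnn :: "ennreal \<Rightarrow> ereal" where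
  "lnEnn x = (if x = \<top> then \<infinity> else lnE (enn2real x))"

definition Gamma :: "'a measure \<Rightarrow> nat \<Rightarrow> (nat \<Rightarrow> 'a \<Rightarrow> 'v::real_normed_vector)
     \<Rightarrow> nat \<Rightarrow> ('v \<Rightarrow> real) \<Rightarrow> ereal" where
  "Gamma M d S n f =
     lnEnn (\<integral>\<^sup>+ \<omega>. ennreal (exp (lam d n * f (scaleR (1 / lam d n) (S n \<omega>)))) \<partial>M)"

text \<open>Box [-m,m]^d intersected with Z^d, with Z^d modelled as 'd => int.\<close>
definition box_pts :: "nat \<Rightarrow> ('d::finite \<Rightarrow> int) set" where
  "box_pts m = {z. \<forall>i. \<bar>z i\<bar> \<le> int m}"

definition exp_nearly_additive ::
  "'a measure \<Rightarrow> (nat \<Rightarrow> 'a \<Rightarrow> 'v::euclidean_space) \<Rightarrow> 'd::finite itself \<Rightarrow> bool" where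
  "exp_nearly_additive M S (_::'d itself) \<longleftrightarrow>
     (\<exists>r::nat. \<exists>S' :: nat \<Rightarrow> ('d \<Rightarrow> int) \<Rightarrow> 'a \<Rightarrow> 'v.
        (\<forall>n. prob_space.indep_vars M (\<lambda>_. borel) (S' n) UNIV \<and>
             (\<forall>z. distr M borel (S' n z) = distr M borel (S n))) \<and>
        (\<forall>\<epsilon>>0. \<forall>C>0. \<exists>K::nat. K > r \<and> (\<forall>k\<ge>K. \<forall>m\<ge>1.
           measure M {\<omega>\<in>space M.
              norm (S ((2*m+1)*k) \<omega> - (\<Sum>z\<in>box_pts m. S' (k - r) z \<omega>))
                > \<epsilon> * lam CARD('d) ((2*m+1)*k)}
            \<le> exp (- C * lam CARD('d) ((2*m+1)*k)))))"

definition exp_regular ::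
  "'a measure \<Rightarrow> (nat \<Rightarrow> 'a \<Rightarrow> 'v::euclidean_space) \<Rightarrow> nat \<Rightarrow> bool" where
  "exp_regular M S d \<longleftrightarrow>
     (\<forall>k\<ge>1. \<forall>\<epsilon>>0. \<forall>C>0. \<exists>N. \<forall>n\<ge>N. \<forall>m::nat.
        (2*m+1)*k \<le> n \<and> n < (2*m+3)*k \<longrightarrow>
        measure M {\<omega>\<in>space M. norm (S n \<omega> - S ((2*m+1)*k) \<omega>) > \<epsilon> * lam d n}
          \<le> exp (- C * lam d n))"

definition exp_tight ::
  "'a measure \<Rightarrow> (nat \<Rightarrow> 'a \<Rightarrow> 'v::euclidean_space) \<Rightarrow> nat \<Rightarrow> bool" where
  "exp_tight M S d \<longleftrightarrow>
     (\<forall>\<alpha>>0. \<exists>K. compact K \<and>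
        limsup (\<lambda>n. lnE (measure M {\<omega>\<in>space M. scaleR (1 / lam d n) (S n \<omega>) \<notin> K})
                    / ereal (lam d n)) \<le> - ereal \<alpha>)"

end

theory Submission
  imports Defs
begin

text \<open>
  Bounded exponential moments of every linear functional of \<open>S\<^sup>n\<close> at scale \<open>|\<Lambda>\<^sup>n|\<close> give
  \<open>P(\<parallel>S\<^sup>n\<parallel> > R |\<Lambda>\<^sup>n|) \<le> exp (- C |\<Lambda>\<^sup>n|)\<close> for large \<open>R\<close>, which is exponential tightness.

  For concave Lipschitz \<open>f\<close> write \<open>p(n) = \<Gamma>\<^sub>n(f) / |\<Lambda>\<^sup>n|\<close>. Each comparison between two such
  quantities changes the exponent only on an event of probability \<open>1 - exp (- C |\<Lambda>|)\<close>; by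
  Young's inequality and the second-moment bound the complement carries at most half of the
  exponential moment, which costs \<open>ln 2 / |\<Lambda>|\<close>. Near additivity, independence and Jensen's
  inequality give \<open>p((2m+1)k) \<ge> p(k - r) - \<epsilon>\<close>, exponential regularity passes from the multiples
  \<open>(2m+1)k\<close> to every \<open>n\<close>, and enlarging the volume from \<open>|\<Lambda>\<^sup>k\<^sup>-\<^sup>r|\<close> to \<open>|\<Lambda>\<^sup>k|\<close> costs
  \<open>o(1)\<close>. Hence \<open>p(n) \<ge> p(j) - \<epsilon>\<close> for all large \<open>j\<close> and then all large \<open>n\<close>, which forces
  \<open>liminf = limsup\<close>; the moment bound keeps the limit below \<open>\<infinity>\<close>.
\<close>

lemma lam_ge_one: "n \<ge> 1 \<Longrightarrow> lam d n \<ge> 1"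
proof -
  assume "n \<ge> 1"
  then have "(1::nat) \<le> (2 * n) ^ d" by (simp add: one_le_power)
  then show ?thesis unfolding lam_def by linarith
qed

lemma lam_pos: "n \<ge> 1 \<Longrightarrow> lam d n > 0"
  using lam_ge_one[of n d] by linarith

lemma lam_mono: "n \<le> m \<Longrightarrow> lam d n \<le> lam d m"
  unfolding lam_def by (simp add: power_mono)

lemma real_le_lam: "d \<ge> 1 \<Longrightarrow> real n \<le> lam d n"
proof (cases "n = 0")
  case False
  assume "d \<ge> 1"
  then have "2 * n \<le> (2 * n) ^ d" using False by (intro self_le_power) auto
  then show ?thesis unfolding lam_def by linarith
qed (simp add: lam_def)

lemma lam_odd_mult: "lam d ((2 * m + 1) * k) = real ((2 * m + 1) ^ d) * lam d k"
proof -
  have "2 * ((2 * m + 1) * k) = (2 * m + 1) * (2 * k)" by simp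
  then show ?thesis unfolding lam_def by (simp only: power_mult_distrib of_nat_mult)
qed

lemma filterlim_lam_at_top:
  assumes "d \<ge> 1" "filterlim b at_top sequentially"
  shows "filterlim (\<lambda>j. lam d (b j)) at_top sequentially"
proof (rule filterlim_at_top_mono)
  show "filterlim (\<lambda>j. real (b j)) at_top sequentially"
    by (rule filterlim_compose[OF filterlim_real_sequentially assms(2)])
  show "\<forall>\<^sub>F j in sequentially. real (b j) \<le> lam d (b j)"
    using real_le_lam[OF assms(1)] by simp
qed

lemma tendsto_divide_lam_0:
  assumes "d \<ge> 1" "filterlim b at_top sequentially"
  shows "((\<lambda>j. c / lam d (b j)) \<longlongrightarrow> 0) sequentially"
  by (rule tendsto_divide_0[OF tendsto_const
        filterlim_at_top_imp_at_infinity[OF filterlim_lam_at_top[OF assms]]])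

lemma lam_ratio_tendsto_1:
  assumes close: "eventually (\<lambda>j. b j \<le> a j \<and> a j \<le> b j + c) sequentially"
    and b: "filterlim b at_top sequentially"
  shows "((\<lambda>j. lam d (a j) / lam d (b j)) \<longlongrightarrow> 1) sequentially"
proof -
  have "filterlim (\<lambda>j. real (b j)) at_top sequentially"
    by (rule filterlim_compose[OF filterlim_real_sequentially b])
  then have c0: "((\<lambda>j. real c / real (b j)) \<longlongrightarrow> 0) sequentially"
    by (rule tendsto_divide_0[OF tendsto_const filterlim_at_top_imp_at_infinity])
  have b1: "eventually (\<lambda>j. b j \<ge> 1) sequentially"
    using b unfolding filterlim_at_top by (rule allE[of _ 1])
  have "((\<lambda>j. real (a j) / real (b j)) \<longlongrightarrow> 1) sequentially"
  proof (rule tendsto_sandwich[of "\<lambda>_. 1" _ _ "\<lambda>j. 1 + real c / real (b j)"])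
    show "\<forall>\<^sub>F j in sequentially. 1 \<le> real (a j) / real (b j)"
      using close b1 by eventually_elim auto
    show "\<forall>\<^sub>F j in sequentially. real (a j) / real (b j) \<le> 1 + real c / real (b j)"
      using close b1 by eventually_elim (auto simp: field_simps)
    show "((\<lambda>j. 1 + real c / real (b j)) \<longlongrightarrow> 1) sequentially"
      using tendsto_add[OF tendsto_const c0, of 1] by simp
  qed simp
  then have "((\<lambda>j. (real (a j) / real (b j)) ^ d) \<longlongrightarrow> 1) sequentially"
    using tendsto_power by fastforce
  moreover have "eventually (\<lambda>j. (real (a j) / real (b j)) ^ d = lam d (a j) / lam d (b j)) sequentially"
    using b1 by eventually_elim (simp add: lam_def power_divide power_mult_distrib)
  ultimately show ?thesis using tendsto_cong by fastforce
qed

lemma box_pts_eq_PiE: "box_pts m = (Pi\<^sub>E UNIV (\<lambda>_. {- int m..int m}) :: ('d::finite \<Rightarrow> int) set)"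
proof -
  have "\<bar>z i\<bar> \<le> int m \<longleftrightarrow> z i \<in> {- int m..int m}" for z :: "'d \<Rightarrow> int" and i by auto
  then show ?thesis unfolding box_pts_def PiE_UNIV_domain Pi_def by auto
qed

lemma finite_box_pts: "finite (box_pts m :: ('d::finite \<Rightarrow> int) set)"
  unfolding box_pts_eq_PiE by (intro finite_PiE) auto

lemma card_box_pts: "card (box_pts m :: ('d::finite \<Rightarrow> int) set) = (2 * m + 1) ^ CARD('d)"
  unfolding box_pts_eq_PiE by (subst card_PiE) (simp_all add: nat_add_distrib nat_mult_distrib)

lemma box_pts_volume:
  assumes "d = CARD('d::finite)"
  shows "finite (box_pts m :: ('d \<Rightarrow> int) set)" "box_pts m \<noteq> ({} :: ('d \<Rightarrow> int) set)"
    "real (card (box_pts m :: ('d \<Rightarrow> int) set)) \<ge> 1"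
    "lam d ((2 * m + 1) * k) = real (card (box_pts m :: ('d \<Rightarrow> int) set)) * lam d k"
proof -
  have card: "card (box_pts m :: ('d \<Rightarrow> int) set) = (2 * m + 1) ^ d" unfolding assms by (rule card_box_pts)
  then show "box_pts m \<noteq> ({} :: ('d \<Rightarrow> int) set)" "real (card (box_pts m :: ('d \<Rightarrow> int) set)) \<ge> 1"
    by auto
  show "finite (box_pts m :: ('d \<Rightarrow> int) set)" by (rule finite_box_pts)
  show "lam d ((2 * m + 1) * k) = real (card (box_pts m :: ('d \<Rightarrow> int) set)) * lam d k"
    unfolding card by (rule lam_odd_mult)
qed

lemma exp_neg_le_half: "1 \<le> l \<Longrightarrow> exp (- l) \<le> (1 / 2 :: real)"
proof -
  assume "1 \<le> l"
  then have "exp (- l) \<le> exp (- 1)" by simp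
  moreover have "2 \<le> exp (1 :: real)" using exp_ge_add_one_self[of 1] by simp
  ultimately show ?thesis by (simp add: exp_minus field_simps) (meson exp_le_cancel_iff order_trans)
qed

lemma exp_norm_le_sum_exp_inner:
  fixes x :: "'v::euclidean_space"
  assumes "c \<ge> 0"
  shows "exp (c * norm x) \<le> (\<Sum>b\<in>Basis. exp (((c * DIM('v)) *\<^sub>R b) \<bullet> x) + exp ((- (c * DIM('v)) *\<^sub>R b) \<bullet> x))"
proof -
  obtain b0 where b0: "b0 \<in> Basis" "\<And>b. b \<in> Basis \<Longrightarrow> \<bar>x \<bullet> b\<bar> \<le> \<bar>x \<bullet> b0\<bar>"
  proof -
    have "Max ((\<lambda>b. \<bar>x \<bullet> b\<bar>) ` Basis) \<in> (\<lambda>b. \<bar>x \<bullet> b\<bar>) ` Basis"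
      by (rule Max_in) auto
    then obtain b0 where b0: "b0 \<in> Basis" "Max ((\<lambda>b. \<bar>x \<bullet> b\<bar>) ` Basis) = \<bar>x \<bullet> b0\<bar>"
      by (metis (no_types, lifting) imageE)
    have "\<bar>x \<bullet> b\<bar> \<le> \<bar>x \<bullet> b0\<bar>" if "b \<in> Basis" for b
      using that b0(2)[symmetric] by (simp add: Max_ge)
    then show ?thesis using that b0(1) by blast
  qed
  have "norm x \<le> (\<Sum>b\<in>Basis. \<bar>x \<bullet> b\<bar>)" by (rule norm_le_l1)
  also have "\<dots> \<le> (\<Sum>b\<in>(Basis::'v set). \<bar>x \<bullet> b0\<bar>)" by (rule sum_mono) (use b0 in auto)
  also have "\<dots> = DIM('v) * \<bar>x \<bullet> b0\<bar>" by simp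
  finally have "exp (c * norm x) \<le> exp (c * DIM('v) * \<bar>x \<bullet> b0\<bar>)"
    using assms by (simp add: mult_left_mono mult.assoc)
  also have "\<dots> \<le> exp (((c * DIM('v)) *\<^sub>R b0) \<bullet> x) + exp ((- (c * DIM('v)) *\<^sub>R b0) \<bullet> x)"
    by (cases "x \<bullet> b0 \<ge> 0") (auto simp: abs_if inner_commute add_increasing add_increasing2)
  also have "\<dots> \<le> (\<Sum>b\<in>Basis. exp (((c * DIM('v)) *\<^sub>R b) \<bullet> x) + exp ((- (c * DIM('v)) *\<^sub>R b) \<bullet> x))"
    using b0(1) by (intro member_le_sum) auto
  finally show ?thesis .
qed

text \<open>The index \<open>m\<close> with \<open>(2m+1)k \<le> n < (2m+3)k\<close> in the definition of exponential regularity.\<close>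

definition block_index :: "nat \<Rightarrow> nat \<Rightarrow> nat" where
  "block_index k n = (n div k - 1) div 2"

lemma block_index_bounds:
  assumes k: "k \<ge> 1" and n: "n \<ge> k"
  shows "(2 * block_index k n + 1) * k \<le> n" "n < (2 * block_index k n + 3) * k"
proof -
  define q where "q = n div k"
  have q1: "q \<ge> 1" using k n unfolding q_def by (simp add: Suc_le_eq div_greater_zero_iff)
  have "n = q * k + n mod k" "n mod k < k" unfolding q_def using k by auto
  then have qk: "q * k \<le> n" "n < (q + 1) * k" by (linarith, simp)
  have "2 * block_index k n + 1 \<le> q" "q + 1 \<le> 2 * block_index k n + 3"
    unfolding block_index_def q_def[symmetric] using q1 by presburger+
  then show "(2 * block_index k n + 1) * k \<le> n" "n < (2 * block_index k n + 3) * k"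
    using qk mult_le_mono1 by (meson le_trans, meson less_le_trans)
qed

lemma filterlim_block_at_top:
  assumes k: "k \<ge> 1"
  shows "filterlim (\<lambda>n. (2 * block_index k n + 1) * k) at_top sequentially"
  unfolding filterlim_at_top
proof
  fix Z :: nat
  show "\<forall>\<^sub>F n in sequentially. Z \<le> (2 * block_index k n + 1) * k"
  proof (rule eventually_sequentiallyI[of "Z + 3 * k"])
    fix n assume "Z + 3 * k \<le> n"
    then show "Z \<le> (2 * block_index k n + 1) * k"
      using block_index_bounds(2)[OF k, of n] by (auto simp: algebra_simps)
  qed
qed

lemma lipschitz_on_UNIV_lower:
  assumes "L-lipschitz_on UNIV f"
  shows "f x - L * norm (y - x) \<le> f y"
  using lipschitz_onD[OF assms, of y x] by (simp add: dist_norm dist_real_def abs_le_iff)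

lemma lipschitz_on_UNIV_upper:
  assumes "L-lipschitz_on UNIV f"
  shows "f y \<le> f x + L * norm (y - x)"
  using lipschitz_onD[OF assms, of y x] by (simp add: dist_norm dist_real_def abs_le_iff)

lemma norm_scaleR_inverse_diff_le:
  fixes T T' :: "'v::real_normed_vector"
  assumes l: "0 < l" "l \<le> l'" and T: "norm T \<le> R * l" and T': "norm (T' - T) \<le> \<eta> * l"
    and R: "R \<ge> 0" and \<eta>: "\<eta> \<ge> 0"
  shows "norm ((1 / l') *\<^sub>R T' - (1 / l) *\<^sub>R T) \<le> \<eta> + R * (l' - l) / l"
proof -
  have l': "l' > 0" using l by simp
  have "norm ((1 / l') *\<^sub>R (T' - T)) \<le> \<eta>"
    using T' l \<eta> by (simp add: divide_le_eq mult_left_mono order_trans[OF _ mult_left_mono[OF l(2)]])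
  moreover have "norm ((1 / l' - 1 / l) *\<^sub>R T) \<le> R * (l' - l) / l"
  proof -
    have "norm ((1 / l' - 1 / l) *\<^sub>R T) = (l' - l) / (l * l') * norm T"
      using l l' by (simp add: field_simps)
    also have "\<dots> \<le> (l' - l) / (l * l') * (R * l)" using T l by (intro mult_left_mono) auto
    also have "\<dots> = R * (l' - l) / l'" using l by (simp add: field_simps)
    also have "\<dots> \<le> R * (l' - l) / l" using l R by (intro divide_left_mono) auto
    finally show ?thesis .
  qed
  moreover have "(1 / l') *\<^sub>R T' - (1 / l) *\<^sub>R T = (1 / l') *\<^sub>R (T' - T) + (1 / l' - 1 / l) *\<^sub>R T"
    by (simp add: algebra_simps)
  ultimately show ?thesis by (metis add_mono norm_triangle_le)
qed

lemma lipschitz_rescaled_lower: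
  fixes f :: "'v::real_normed_vector \<Rightarrow> real"
  assumes lip: "L-lipschitz_on UNIV f" and l: "0 < l" "l \<le> l'"
    and T: "norm T \<le> R * l" and T': "norm (T' - T) \<le> \<eta> * l" and R: "R \<ge> 0" and \<eta>: "\<eta> \<ge> 0"
  shows "l * f ((1 / l) *\<^sub>R T) - (l' - l) * (\<bar>f 0\<bar> + L * (2 * R + \<eta>)) - l * L * \<eta>
           \<le> l' * f ((1 / l') *\<^sub>R T')"
proof -
  have L: "L \<ge> 0" using lip by (simp add: lipschitz_on_def)
  have "norm ((1 / l') *\<^sub>R T') \<le> norm T' / l" using l by (simp add: frac_le)
  also have "\<dots> \<le> (norm T + norm (T' - T)) / l"
    using norm_triangle_ineq[of T "T' - T"] l by (simp add: divide_right_mono)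
  also have "\<dots> \<le> R + \<eta>" using T T' l by (simp add: divide_le_eq algebra_simps)
  finally have "f 0 - L * (R + \<eta>) \<le> f ((1 / l') *\<^sub>R T')"
    using lipschitz_on_UNIV_lower[OF lip, of 0 "(1 / l') *\<^sub>R T'"] mult_left_mono[OF _ L] by force
  then have far: "- (\<bar>f 0\<bar> + L * (R + \<eta>)) \<le> f ((1 / l') *\<^sub>R T')" by linarith
  have "norm ((1 / l') *\<^sub>R T' - (1 / l) *\<^sub>R T) \<le> \<eta> + R * (l' - l) / l"
    by (rule norm_scaleR_inverse_diff_le[OF l T T' R \<eta>])
  then have near: "f ((1 / l) *\<^sub>R T) - L * (\<eta> + R * (l' - l) / l) \<le> f ((1 / l') *\<^sub>R T')"
    using lipschitz_on_UNIV_lower[OF lip, of "(1 / l) *\<^sub>R T" "(1 / l') *\<^sub>R T'"] mult_left_mono[OF _ L]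
    by force
  have "l' * f ((1 / l') *\<^sub>R T') = (l' - l) * f ((1 / l') *\<^sub>R T') + l * f ((1 / l') *\<^sub>R T')"
    by (simp add: algebra_simps)
  also have "\<dots> \<ge> (l' - l) * - (\<bar>f 0\<bar> + L * (R + \<eta>)) + l * (f ((1 / l) *\<^sub>R T) - L * (\<eta> + R * (l' - l) / l))"
    using far near l by (intro add_mono mult_left_mono) auto
  also have "(l' - l) * - (\<bar>f 0\<bar> + L * (R + \<eta>)) + l * (f ((1 / l) *\<^sub>R T) - L * (\<eta> + R * (l' - l) / l))
      = l * f ((1 / l) *\<^sub>R T) - (l' - l) * (\<bar>f 0\<bar> + L * (2 * R + \<eta>)) - l * L * \<eta>"
    using l by (simp add: field_simps)
  finally show ?thesis .
qed

lemma concave_lipschitz_sum_lower: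
  fixes f :: "'v::real_normed_vector \<Rightarrow> real" and T :: "'i \<Rightarrow> 'v" and l lB :: real
  assumes conc: "concave_on UNIV f" and lip: "L-lipschitz_on UNIV f"
    and B: "finite B" "B \<noteq> {}" and l: "l > 0" and lB: "lB = card B * l"
    and close: "norm (S - (\<Sum>z\<in>B. T z)) \<le> e * lB"
  shows "(\<Sum>z\<in>B. l * f ((1 / l) *\<^sub>R T z)) - lB * (L * e) \<le> lB * f ((1 / lB) *\<^sub>R S)"
proof -
  have L: "L \<ge> 0" using lip by (simp add: lipschitz_on_def)
  have p: "real (card B) > 0" using B by (simp add: card_gt_0_iff)
  have lBp: "lB > 0" using p l lB by simp
  have "(\<Sum>z\<in>B. f ((1 / l) *\<^sub>R T z)) / card B = (\<Sum>z\<in>B. (1 / card B) * f ((1 / l) *\<^sub>R T z))"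
    by (simp add: sum_divide_distrib)
  also have "\<dots> \<le> f (\<Sum>z\<in>B. (1 / card B) *\<^sub>R (1 / l) *\<^sub>R T z)"
    by (rule concave_on_sum[OF B conc]) (use p in auto)
  also have "(\<Sum>z\<in>B. (1 / card B) *\<^sub>R (1 / l) *\<^sub>R T z) = (1 / lB) *\<^sub>R (\<Sum>z\<in>B. T z)"
    using lB by (simp add: scaleR_sum_right)
  finally have "(\<Sum>z\<in>B. f ((1 / l) *\<^sub>R T z)) \<le> card B * f ((1 / lB) *\<^sub>R (\<Sum>z\<in>B. T z))"
    using p by (simp add: divide_le_eq mult.commute)
  then have "l * (\<Sum>z\<in>B. f ((1 / l) *\<^sub>R T z)) \<le> lB * f ((1 / lB) *\<^sub>R (\<Sum>z\<in>B. T z))"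
    using lB l by (simp add: mult.assoc mult_left_mono)
  then have jensen: "(\<Sum>z\<in>B. l * f ((1 / l) *\<^sub>R T z)) \<le> lB * f ((1 / lB) *\<^sub>R (\<Sum>z\<in>B. T z))"
    by (simp add: sum_distrib_left)
  have "norm ((1 / lB) *\<^sub>R S - (1 / lB) *\<^sub>R (\<Sum>z\<in>B. T z)) \<le> e"
    using close lBp by (simp add: scaleR_diff_right[symmetric] divide_le_eq mult.commute)
  then have "f ((1 / lB) *\<^sub>R (\<Sum>z\<in>B. T z)) - L * e \<le> f ((1 / lB) *\<^sub>R S)"
    using lipschitz_on_UNIV_lower[OF lip, of "(1 / lB) *\<^sub>R (\<Sum>z\<in>B. T z)" "(1 / lB) *\<^sub>R S"]
      mult_left_mono[OF _ L] by force
  then have "lB * f ((1 / lB) *\<^sub>R (\<Sum>z\<in>B. T z)) - lB * (L * e) \<le> lB * f ((1 / lB) *\<^sub>R S)"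
    using lBp by (simp add: right_diff_distrib[symmetric])
  with jensen show ?thesis by linarith
qed

lemma ln_div_ge_of_le_exp:
  fixes y l l' \<rho> \<gamma> :: real
  assumes y: "0 < y" "y \<le> exp (\<gamma> * l')" and l: "l > 0" and l': "l' = \<rho> * l" and \<rho>: "\<rho> \<ge> 1"
  shows "ln y / l - \<gamma> * (\<rho> - 1) \<le> ln y / l'"
proof -
  have "ln y \<le> \<gamma> * l'" using y by (metis ln_exp ln_le_cancel_iff exp_gt_zero)
  define u where "u = ln y / l"
  have "u \<le> \<gamma> * \<rho>" using \<open>ln y \<le> \<gamma> * l'\<close> l l' by (simp add: u_def divide_le_eq mult.assoc)
  then have "(\<rho> - 1) * u \<le> (\<rho> - 1) * (\<gamma> * \<rho>)" using \<rho> by (intro mult_left_mono) auto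
  then have "u - \<gamma> * (\<rho> - 1) \<le> u / \<rho>" using \<rho> by (simp add: field_simps)
  then show ?thesis using l' by (simp add: u_def mult.commute)
qed

lemma ln_enn2real_power_div:
  assumes "x \<noteq> \<infinity>" "0 < enn2real x" "p > 0"
  shows "ln (enn2real (x ^ p)) / (real p * l) = ln (enn2real x) / l"
proof -
  have "ennreal (enn2real x) = x" using assms(1) by (simp add: less_top)
  then have "enn2real (x ^ p) = enn2real x ^ p"
    by (metis enn2real_ennreal enn2real_nonneg ennreal_power zero_le_power)
  then show ?thesis using assms(2,3) by (simp add: ln_realpow)
qed

lemma ereal_tendsto_of_almost_increasing:
  fixes a :: "nat \<Rightarrow> real"
  assumes almost_inc: "\<And>\<epsilon>. \<epsilon> > 0 \<Longrightarrow> \<exists>J. \<forall>j\<ge>J. \<exists>N. \<forall>n\<ge>N. a j - \<epsilon> \<le> a n"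
    and bounded: "eventually (\<lambda>n. a n \<le> c) sequentially"
  shows "\<exists>G. G \<noteq> \<infinity> \<and> (\<lambda>n. ereal (a n)) \<longlonglongrightarrow> G"
proof -
  let ?a = "\<lambda>n. ereal (a n)"
  have "limsup ?a \<le> liminf ?a + ereal \<epsilon>" if \<epsilon>: "\<epsilon> > 0" for \<epsilon> :: real
  proof (rule Limsup_bounded)
    obtain J where J: "\<And>j. j \<ge> J \<Longrightarrow> \<exists>N. \<forall>n\<ge>N. a j - \<epsilon> \<le> a n" using almost_inc[OF \<epsilon>] by blast
    have "?a j \<le> liminf ?a + ereal \<epsilon>" if j: "j \<ge> J" for j
    proof -
      obtain N where "\<forall>n\<ge>N. a j - \<epsilon> \<le> a n" using J[OF j] by blast
      then have "ereal (a j - \<epsilon>) \<le> liminf ?a"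
        by (intro Liminf_bounded eventually_sequentiallyI[of N]) auto
      then show ?thesis by (cases "liminf ?a") auto
    qed
    then show "\<forall>\<^sub>F j in sequentially. ?a j \<le> liminf ?a + ereal \<epsilon>"
      unfolding eventually_sequentially by blast
  qed
  then have "limsup ?a \<le> liminf ?a" by (rule ereal_le_epsilon2) auto
  then have "?a \<longlonglongrightarrow> liminf ?a" using Liminf_le_Limsup[of sequentially ?a]
    by (intro Liminf_eq_Limsup) auto
  moreover have "liminf ?a \<noteq> \<infinity>"
  proof -
    have "limsup ?a \<le> ereal c" using bounded by (intro Limsup_bounded) auto
    then show ?thesis using Liminf_le_Limsup[of sequentially ?a] by auto
  qed
  ultimately show ?thesis by blast
qed

lemma nn_integral_eq_of_distr_eq:
  assumes [measurable]: "X \<in> borel_measurable M" "Y \<in> borel_measurable M" "g \<in> borel_measurable borel"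
    and eq: "distr M borel X = distr M borel Y"
  shows "(\<integral>\<^sup>+ \<omega>. g (X \<omega>) \<partial>M) = (\<integral>\<^sup>+ \<omega>. g (Y \<omega>) \<partial>M)"
  using nn_integral_distr[of X M borel g] nn_integral_distr[of Y M borel g] eq by simp

context prob_space
begin

lemma nn_integral_prod_iid:
  fixes X :: "'i \<Rightarrow> 'a \<Rightarrow> 'v::topological_space"
  assumes indep: "indep_vars (\<lambda>_. borel) X I"
    and distr: "\<And>z. z \<in> I \<Longrightarrow> distr M borel (X z) = distr M borel Y"
    and [measurable]: "Y \<in> borel_measurable M" "q \<in> borel_measurable borel"
    and q: "\<And>v. q v \<ge> 0" and B: "finite B" "B \<subseteq> I"
  shows "(\<integral>\<^sup>+ \<omega>. ennreal (\<Prod>z\<in>B. q (X z \<omega>)) \<partial>M) = (\<integral>\<^sup>+ \<omega>. ennreal (q (Y \<omega>)) \<partial>M) ^ card B"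
proof -
  have [measurable]: "X z \<in> borel_measurable M" if "z \<in> I" for z
    using indep that unfolding indep_vars_def by auto
  have "indep_vars (\<lambda>_. borel) (\<lambda>z \<omega>. ennreal (q (X z \<omega>))) B"
    by (rule indep_vars_subset[OF indep_vars_compose2[OF indep] B(2)]) measurable
  then have "(\<integral>\<^sup>+ \<omega>. (\<Prod>z\<in>B. ennreal (q (X z \<omega>))) \<partial>M) = (\<Prod>z\<in>B. \<integral>\<^sup>+ \<omega>. ennreal (q (X z \<omega>)) \<partial>M)"
    by (rule indep_vars_nn_integral[OF B(1)]) auto
  also have "\<dots> = (\<Prod>z\<in>B. \<integral>\<^sup>+ \<omega>. ennreal (q (Y \<omega>)) \<partial>M)"
    using B(2) by (intro prod.cong refl nn_integral_eq_of_distr_eq distr) auto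
  finally show ?thesis using q by (simp add: prod_ennreal)
qed

lemma nn_integral_indicator_le_young:
  assumes [measurable]: "X \<in> borel_measurable M" "A \<in> sets M" and X: "\<And>\<omega>. X \<omega> \<ge> 0" and t: "t > 0"
  shows "(\<integral>\<^sup>+ \<omega>. ennreal (X \<omega>) * indicator A \<omega> \<partial>M)
           \<le> ennreal (t / 2) * (\<integral>\<^sup>+ \<omega>. ennreal ((X \<omega>)\<^sup>2) \<partial>M) + ennreal (1 / (2 * t)) * emeasure M A"
proof -
  have "(\<integral>\<^sup>+ \<omega>. ennreal (X \<omega>) * indicator A \<omega> \<partial>M)
          \<le> (\<integral>\<^sup>+ \<omega>. ennreal (t / 2) * ennreal ((X \<omega>)\<^sup>2) + ennreal (1 / (2 * t)) * indicator A \<omega> \<partial>M)"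
  proof (rule nn_integral_mono)
    fix \<omega>
    have "0 \<le> (t * X \<omega> - 1)\<^sup>2" by simp
    then have "X \<omega> \<le> t / 2 * (X \<omega>)\<^sup>2 + 1 / (2 * t)"
      using t by (simp add: field_simps power2_eq_square)
    then show "ennreal (X \<omega>) * indicator A \<omega> \<le> ennreal (t / 2) * ennreal ((X \<omega>)\<^sup>2) + ennreal (1 / (2 * t)) * indicator A \<omega>"
      using t X[of \<omega>] by (cases "\<omega> \<in> A")
        (simp_all add: ennreal_plus[symmetric] ennreal_mult[symmetric] ennreal_leI del: ennreal_plus)
  qed
  also have "\<dots> = ennreal (t / 2) * (\<integral>\<^sup>+ \<omega>. ennreal ((X \<omega>)\<^sup>2) \<partial>M) + ennreal (1 / (2 * t)) * emeasure M A"
    by (simp add: nn_integral_add nn_integral_cmult nn_integral_cmult_indicator)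
  finally show ?thesis .
qed

lemma nn_integral_noteq_infinite_of_square:
  assumes [measurable]: "X \<in> borel_measurable M"
    and square: "(\<integral>\<^sup>+ \<omega>. ennreal ((X \<omega>)\<^sup>2) \<partial>M) \<le> ennreal c"
  shows "(\<integral>\<^sup>+ \<omega>. ennreal (X \<omega>) \<partial>M) \<noteq> \<infinity>"
proof -
  have "(\<integral>\<^sup>+ \<omega>. ennreal (X \<omega>) \<partial>M) \<le> (\<integral>\<^sup>+ \<omega>. 1 + ennreal ((X \<omega>)\<^sup>2) \<partial>M)"
  proof (intro nn_integral_mono)
    fix \<omega>
    have "X \<omega> \<le> 1 + (X \<omega>)\<^sup>2"
    proof (cases "X \<omega> \<le> 1")
      case False
      then have "X \<omega> * 1 \<le> X \<omega> * X \<omega>" by (intro mult_left_mono) auto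
      then show ?thesis by (simp add: power2_eq_square)
    qed (simp add: add_increasing2)
    then have "ennreal (X \<omega>) \<le> ennreal (1 + (X \<omega>)\<^sup>2)" by (rule ennreal_leI)
    then show "ennreal (X \<omega>) \<le> 1 + ennreal ((X \<omega>)\<^sup>2)" by (simp add: ennreal_plus)
  qed
  also have "\<dots> = 1 + (\<integral>\<^sup>+ \<omega>. ennreal ((X \<omega>)\<^sup>2) \<partial>M)"
    by (subst nn_integral_add) (auto simp: emeasure_space_1)
  also have "\<dots> < \<top>" using le_less_trans[OF square ennreal_less_top] by simp
  finally show ?thesis by simp
qed

lemma nn_integral_off_event_le_half:
  assumes [measurable]: "X \<in> borel_measurable M" "G \<in> sets M" and X: "\<And>\<omega>. X \<omega> \<ge> 0"
    and first: "ennreal (exp (- \<beta> * l)) \<le> (\<integral>\<^sup>+ \<omega>. ennreal (X \<omega>) \<partial>M)"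
    and second: "(\<integral>\<^sup>+ \<omega>. ennreal ((X \<omega>)\<^sup>2) \<partial>M) \<le> ennreal (exp (\<gamma> * l))"
    and small: "measure M (space M - G) \<le> exp (- C * l)"
    and C: "C \<ge> 2 * \<beta> + \<gamma> + 2" and l: "l \<ge> 1"
  shows "(\<integral>\<^sup>+ \<omega>. ennreal (X \<omega>) * indicator (space M - G) \<omega> \<partial>M)
           \<le> ennreal (1 / 2) * (\<integral>\<^sup>+ \<omega>. ennreal (X \<omega>) \<partial>M)"
proof -
  \<comment> \<open>this choice of \<open>t\<close> in Young's inequality makes both terms at most \<open>exp (- (\<beta> + 1) l) / 2\<close>\<close>
  define t where "t = exp (- (\<beta> + \<gamma> + 1) * l)"
  have t: "t > 0" unfolding t_def by simp
  have "(\<integral>\<^sup>+ \<omega>. ennreal (X \<omega>) * indicator (space M - G) \<omega> \<partial>M)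
          \<le> ennreal (t / 2) * ennreal (exp (\<gamma> * l)) + ennreal (1 / (2 * t)) * ennreal (exp (- C * l))"
  proof -
    have "emeasure M (space M - G) \<le> ennreal (exp (- C * l))"
      using small by (simp add: emeasure_eq_measure ennreal_leI)
    with second show ?thesis
      by (intro order_trans[OF nn_integral_indicator_le_young[OF _ _ X t]] add_mono mult_left_mono) auto
  qed
  also have "\<dots> \<le> ennreal (exp (- l) * exp (- \<beta> * l))"
  proof -
    have "1 / t * exp (- C * l) = exp ((\<beta> + \<gamma> + 1 - C) * l)"
      unfolding t_def by (simp add: exp_add[symmetric] exp_minus field_simps)
    also have "\<dots> \<le> exp (- (\<beta> + 1) * l)" using C l by (intro exp_mono mult_right_mono) auto
    finally have "t / 2 * exp (\<gamma> * l) + 1 / (2 * t) * exp (- C * l) \<le> exp (- (\<beta> + 1) * l)"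
      unfolding t_def by (simp add: exp_add[symmetric] field_simps)
    then show ?thesis using t
      by (simp add: exp_add[symmetric] algebra_simps ennreal_leI flip: ennreal_plus ennreal_mult)
  qed
  also have "\<dots> = ennreal (exp (- l)) * ennreal (exp (- \<beta> * l))" by (simp add: ennreal_mult)
  also have "\<dots> \<le> ennreal (1 / 2) * (\<integral>\<^sup>+ \<omega>. ennreal (X \<omega>) \<partial>M)"
    by (intro mult_mono ennreal_leI exp_neg_le_half[OF l] first) auto
  finally show ?thesis .
qed

lemma nn_integral_on_event_ge_half:
  assumes [measurable]: "X \<in> borel_measurable M" "G \<in> sets M" and X: "\<And>\<omega>. X \<omega> \<ge> 0"
    and first: "ennreal (exp (- \<beta> * l)) \<le> (\<integral>\<^sup>+ \<omega>. ennreal (X \<omega>) \<partial>M)"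
    and second: "(\<integral>\<^sup>+ \<omega>. ennreal ((X \<omega>)\<^sup>2) \<partial>M) \<le> ennreal (exp (\<gamma> * l))"
    and small: "measure M (space M - G) \<le> exp (- C * l)"
    and C: "C \<ge> 2 * \<beta> + \<gamma> + 2" and l: "l \<ge> 1"
  shows "ennreal (1 / 2) * (\<integral>\<^sup>+ \<omega>. ennreal (X \<omega>) \<partial>M) \<le> (\<integral>\<^sup>+ \<omega>. ennreal (X \<omega>) * indicator G \<omega> \<partial>M)"
proof -
  define x where "x = (\<integral>\<^sup>+ \<omega>. ennreal (X \<omega>) \<partial>M)"
  have x_fin: "x \<noteq> \<infinity>" unfolding x_def by (rule nn_integral_noteq_infinite_of_square[OF _ second]) measurable
  have bad: "(\<integral>\<^sup>+ \<omega>. ennreal (X \<omega>) * indicator (space M - G) \<omega> \<partial>M) \<le> ennreal (1 / 2) * x"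
    unfolding x_def by (rule nn_integral_off_event_le_half[OF _ _ X first second small C l]) measurable
  have "x = (\<integral>\<^sup>+ \<omega>. ennreal (X \<omega>) * indicator G \<omega> + ennreal (X \<omega>) * indicator (space M - G) \<omega> \<partial>M)"
    unfolding x_def using sets.sets_into_space[of G M]
    by (intro nn_integral_cong) (auto simp: indicator_def)
  also have "\<dots> \<le> (\<integral>\<^sup>+ \<omega>. ennreal (X \<omega>) * indicator G \<omega> \<partial>M) + ennreal (1 / 2) * x"
    using bad by (subst nn_integral_add) (auto intro: add_left_mono)
  finally have "x \<le> (\<integral>\<^sup>+ \<omega>. ennreal (X \<omega>) * indicator G \<omega> \<partial>M) + ennreal (1 / 2) * x" .
  moreover have "x = ennreal (1 / 2) * x + ennreal (1 / 2) * x"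
    by (simp del: ennreal_half flip: distrib_right ennreal_plus)
  moreover have "ennreal (1 / 2) * x \<noteq> \<infinity>" using x_fin by (simp add: ennreal_mult_eq_top_iff)
  ultimately have "ennreal (1 / 2) * x \<le> (\<integral>\<^sup>+ \<omega>. ennreal (X \<omega>) * indicator G \<omega> \<partial>M)"
    by (metis add.commute ennreal_add_left_cancel_le)
  then show ?thesis unfolding x_def .
qed

lemma nn_integral_ge_on_good_event:
  assumes [measurable]: "X \<in> borel_measurable M" "Y \<in> borel_measurable M" "G \<in> sets M"
    and X: "\<And>\<omega>. X \<omega> \<ge> 0" and Y: "\<And>\<omega>. Y \<omega> \<ge> 0"
    and XY: "\<And>\<omega>. \<omega> \<in> G \<Longrightarrow> X \<omega> * exp (- l * \<delta>) \<le> Y \<omega>"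
    and first: "ennreal (exp (- \<beta> * l)) \<le> (\<integral>\<^sup>+ \<omega>. ennreal (X \<omega>) \<partial>M)"
    and second: "(\<integral>\<^sup>+ \<omega>. ennreal ((X \<omega>)\<^sup>2) \<partial>M) \<le> ennreal (exp (\<gamma> * l))"
    and small: "measure M (space M - G) \<le> exp (- C * l)"
    and C: "C \<ge> 2 * \<beta> + \<gamma> + 2" and l: "l \<ge> 1"
  shows "ennreal (exp (- l * \<delta>)) * (ennreal (1 / 2) * (\<integral>\<^sup>+ \<omega>. ennreal (X \<omega>) \<partial>M))
           \<le> (\<integral>\<^sup>+ \<omega>. ennreal (Y \<omega>) \<partial>M)"
proof -
  have "ennreal (exp (- l * \<delta>)) * (ennreal (1 / 2) * (\<integral>\<^sup>+ \<omega>. ennreal (X \<omega>) \<partial>M))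
      \<le> ennreal (exp (- l * \<delta>)) * (\<integral>\<^sup>+ \<omega>. ennreal (X \<omega>) * indicator G \<omega> \<partial>M)"
    by (intro mult_left_mono nn_integral_on_event_ge_half[OF _ _ X first second small C l]) auto
  also have "\<dots> = (\<integral>\<^sup>+ \<omega>. ennreal (exp (- l * \<delta>)) * (ennreal (X \<omega>) * indicator G \<omega>) \<partial>M)"
    by (rule nn_integral_cmult[symmetric]) measurable
  also have "\<dots> \<le> (\<integral>\<^sup>+ \<omega>. ennreal (Y \<omega>) \<partial>M)"
  proof (rule nn_integral_mono)
    fix \<omega>
    show "ennreal (exp (- l * \<delta>)) * (ennreal (X \<omega>) * indicator G \<omega>) \<le> ennreal (Y \<omega>)"
    proof (cases "\<omega> \<in> G")
      case True
      then have "ennreal (exp (- l * \<delta>) * X \<omega>) \<le> ennreal (Y \<omega>)"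
        using XY by (intro ennreal_leI) (simp add: mult.commute)
      then show ?thesis using True X[of \<omega>] by (simp add: ennreal_mult)
    qed simp
  qed
  finally show ?thesis .
qed

lemma ln_nn_integral_ge_on_good_event:
  assumes [measurable]: "X \<in> borel_measurable M" "Y \<in> borel_measurable M" "G \<in> sets M"
    and X: "\<And>\<omega>. X \<omega> \<ge> 0" and Y: "\<And>\<omega>. Y \<omega> \<ge> 0"
    and XY: "\<And>\<omega>. \<omega> \<in> G \<Longrightarrow> X \<omega> * exp (- l * \<delta>) \<le> Y \<omega>"
    and first: "ennreal (exp (- \<beta> * l)) \<le> (\<integral>\<^sup>+ \<omega>. ennreal (X \<omega>) \<partial>M)"
    and second: "(\<integral>\<^sup>+ \<omega>. ennreal ((X \<omega>)\<^sup>2) \<partial>M) \<le> ennreal (exp (\<gamma> * l))"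
    and small: "measure M (space M - G) \<le> exp (- C * l)"
    and C: "C \<ge> 2 * \<beta> + \<gamma> + 2" and l: "l \<ge> 1"
    and Y_fin: "(\<integral>\<^sup>+ \<omega>. ennreal (Y \<omega>) \<partial>M) \<noteq> \<infinity>"
  shows "ln (enn2real (\<integral>\<^sup>+ \<omega>. ennreal (X \<omega>) \<partial>M)) / l - \<delta> - ln 2 / l
           \<le> ln (enn2real (\<integral>\<^sup>+ \<omega>. ennreal (Y \<omega>) \<partial>M)) / l"
proof -
  define x where "x = enn2real (\<integral>\<^sup>+ \<omega>. ennreal (X \<omega>) \<partial>M)"
  define y where "y = enn2real (\<integral>\<^sup>+ \<omega>. ennreal (Y \<omega>) \<partial>M)"
  have le: "ennreal (exp (- l * \<delta>)) * (ennreal (1 / 2) * (\<integral>\<^sup>+ \<omega>. ennreal (X \<omega>) \<partial>M))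
      \<le> (\<integral>\<^sup>+ \<omega>. ennreal (Y \<omega>) \<partial>M)"
    by (rule nn_integral_ge_on_good_event[OF _ _ _ X Y XY first second small C l]) measurable
  have "(\<integral>\<^sup>+ \<omega>. ennreal (X \<omega>) \<partial>M) \<noteq> \<infinity>"
    by (rule nn_integral_noteq_infinite_of_square[OF _ second]) measurable
  then have Xr: "(\<integral>\<^sup>+ \<omega>. ennreal (X \<omega>) \<partial>M) = ennreal x" unfolding x_def by (simp add: less_top)
  have Yr: "(\<integral>\<^sup>+ \<omega>. ennreal (Y \<omega>) \<partial>M) = ennreal y" using Y_fin unfolding y_def by (simp add: less_top)
  have x0: "x \<ge> 0" "y \<ge> 0" unfolding x_def y_def by simp_all
  have "exp (- \<beta> * l) \<le> x" using first x0 unfolding Xr by (simp add: ennreal_le_iff)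
  then have xpos: "x > 0" by (meson exp_gt_zero less_le_trans)
  have "ennreal (exp (- l * \<delta>)) * (ennreal (1 / 2) * ennreal x) = ennreal (exp (- l * \<delta>) / 2 * x)"
    using x0 by (simp del: ennreal_half flip: ennreal_mult)
  then have "ennreal (exp (- l * \<delta>) / 2 * x) \<le> ennreal y" using le unfolding Xr Yr by simp
  then have "exp (- l * \<delta>) / 2 * x \<le> y" using x0 by (simp add: ennreal_le_iff)
  then have "ln (exp (- l * \<delta>) / 2 * x) \<le> ln y"
    using xpos by (intro ln_mono) auto
  then have "ln x - l * \<delta> - ln 2 \<le> ln y" using xpos by (simp add: ln_mult ln_div)
  then have "(ln x - l * \<delta> - ln 2) / l \<le> ln y / l" using l by (intro divide_right_mono) auto
  then show ?thesis using l unfolding x_def[symmetric] y_def[symmetric] by (simp add: diff_divide_distrib)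
qed

end

definition exp_growth :: "nat \<Rightarrow> (nat \<Rightarrow> ennreal) \<Rightarrow> bool" where
  "exp_growth d g \<longleftrightarrow> (\<exists>B. \<forall>n\<ge>1. g n \<le> ennreal (exp (B * lam d n)))"

lemma exp_growth_nonneg_const:
  assumes "exp_growth d g"
  obtains B where "B \<ge> 0" "\<And>n. n \<ge> 1 \<Longrightarrow> g n \<le> ennreal (exp (B * lam d n))"
proof -
  obtain B where B: "\<And>n. n \<ge> 1 \<Longrightarrow> g n \<le> ennreal (exp (B * lam d n))"
    using assms unfolding exp_growth_def by blast
  have "g n \<le> ennreal (exp (max B 0 * lam d n))" if "n \<ge> 1" for n
  proof -
    have "B * lam d n \<le> max B 0 * lam d n" using lam_pos[OF that, of d] by (intro mult_right_mono) auto
    then show ?thesis using B[OF that] by (meson ennreal_leI exp_le_cancel_iff order_trans)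
  qed
  then show ?thesis using that[of "max B 0"] by simp
qed

lemma exp_growth_add:
  assumes "exp_growth d g" "exp_growth d h"
  shows "exp_growth d (\<lambda>n. g n + h n)"
proof -
  obtain B1 B2 where B1: "\<And>n. n \<ge> 1 \<Longrightarrow> g n \<le> ennreal (exp (B1 * lam d n))"
    and B2: "\<And>n. n \<ge> 1 \<Longrightarrow> h n \<le> ennreal (exp (B2 * lam d n))"
    using assms unfolding exp_growth_def by blast
  have "g n + h n \<le> ennreal (exp ((max B1 B2 + 1) * lam d n))" if n: "n \<ge> 1" for n
  proof -
    have l: "lam d n \<ge> 1" using lam_ge_one[OF n] .
    have "B1 * lam d n \<le> max B1 B2 * lam d n" "B2 * lam d n \<le> max B1 B2 * lam d n"
      using l by (intro mult_right_mono; simp)+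
    then have "g n + h n \<le> ennreal (exp (max B1 B2 * lam d n)) + ennreal (exp (max B1 B2 * lam d n))"
      using B1[OF n] B2[OF n] by (intro add_mono) (meson ennreal_leI exp_le_cancel_iff order_trans)+
    also have "\<dots> = ennreal (2 * exp (max B1 B2 * lam d n))" by (simp flip: ennreal_plus)
    also have "\<dots> \<le> ennreal (exp ((max B1 B2 + 1) * lam d n))"
      using exp_neg_le_half[OF l] by (intro ennreal_leI) (simp add: distrib_right exp_add exp_minus field_simps)
    finally show ?thesis .
  qed
  then show ?thesis unfolding exp_growth_def by blast
qed

lemma exp_growth_sum:
  "finite I \<Longrightarrow> (\<And>i. i \<in> I \<Longrightarrow> exp_growth d (g i)) \<Longrightarrow> exp_growth d (\<lambda>n. \<Sum>i\<in>I. g i n)"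
proof (induction I rule: finite_induct)
  case empty
  then show ?case unfolding exp_growth_def by auto
next
  case (insert i I)
  then show ?case by (simp add: exp_growth_add)
qed

lemma exp_growth_mono:
  "exp_growth d h \<Longrightarrow> (\<And>n. n \<ge> 1 \<Longrightarrow> g n \<le> h n) \<Longrightarrow> exp_growth d g"
  unfolding exp_growth_def by (meson order_trans)

locale exp_moment_process = prob_space M for M :: "'a measure" +
  fixes S :: "nat \<Rightarrow> 'a \<Rightarrow> 'v::euclidean_space" and d :: nat
  assumes S_measurable[measurable]: "\<And>n. S n \<in> borel_measurable M"
    and log_moment_bounded: "\<And>l. \<exists>B::real. \<forall>n\<ge>1.
          lnEnn (\<integral>\<^sup>+ \<omega>. ennreal (exp (l \<bullet> S n \<omega>)) \<partial>M) / ereal (lam d n) \<le> ereal B"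
begin

lemma exp_growth_exp_inner: "exp_growth d (\<lambda>n. \<integral>\<^sup>+ \<omega>. ennreal (exp (l \<bullet> S n \<omega>)) \<partial>M)"
proof -
  obtain B where B: "\<And>n. n \<ge> 1 \<Longrightarrow> lnEnn (\<integral>\<^sup>+ \<omega>. ennreal (exp (l \<bullet> S n \<omega>)) \<partial>M) / ereal (lam d n) \<le> ereal B"
    using log_moment_bounded[of l] by blast
  have "(\<integral>\<^sup>+ \<omega>. ennreal (exp (l \<bullet> S n \<omega>)) \<partial>M) \<le> ennreal (exp (B * lam d n))" if n: "n \<ge> 1" for n
  proof -
    define I where "I = (\<integral>\<^sup>+ \<omega>. ennreal (exp (l \<bullet> S n \<omega>)) \<partial>M)"
    have l: "lam d n > 0" using lam_pos[OF n] .
    have hB: "lnEnn I / ereal (lam d n) \<le> ereal B" using B[OF n] by (simp add: I_def)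
    consider "I = \<top>" | "I = 0" | "I \<noteq> \<top>" "0 < enn2real I"
      by (metis enn2real_eq_0_iff enn2real_nonneg less_le)
    then show ?thesis
    proof cases
      case 1
      then show ?thesis using hB l by (simp add: lnEnn_def)
    next
      case 2
      then show ?thesis by (simp add: I_def)
    next
      case 3
      then have "ln (enn2real I) \<le> B * lam d n"
        using hB l by (simp add: lnEnn_def lnE_def divide_le_eq)
      then have "enn2real I \<le> exp (B * lam d n)" using 3 by (metis exp_le_cancel_iff exp_ln)
      then show ?thesis using 3 unfolding I_def by (simp add: ennreal_leI less_top)
    qed
  qed
  then show ?thesis unfolding exp_growth_def by blast
qed

lemma exp_growth_exp_norm: "exp_growth d (\<lambda>n. \<integral>\<^sup>+ \<omega>. ennreal (exp (c * norm (S n \<omega>))) \<partial>M)"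
  if "c \<ge> 0"
proof (rule exp_growth_mono)
  let ?E = "\<lambda>v n. \<integral>\<^sup>+ \<omega>. ennreal (exp (v \<bullet> S n \<omega>)) \<partial>M"
  define D where "D = c * DIM('v)"
  show "exp_growth d (\<lambda>n. \<Sum>b\<in>Basis. ?E (D *\<^sub>R b) n + ?E ((- D) *\<^sub>R b) n)"
    by (intro exp_growth_sum exp_growth_add exp_growth_exp_inner) auto
  fix n
  have "(\<integral>\<^sup>+ \<omega>. ennreal (exp (c * norm (S n \<omega>))) \<partial>M)
      \<le> (\<integral>\<^sup>+ \<omega>. (\<Sum>b\<in>Basis. ennreal (exp ((D *\<^sub>R b) \<bullet> S n \<omega>)) + ennreal (exp (((- D) *\<^sub>R b) \<bullet> S n \<omega>))) \<partial>M)"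
  proof (rule nn_integral_mono)
    fix \<omega>
    have "ennreal (exp (c * norm (S n \<omega>)))
        \<le> ennreal (\<Sum>b\<in>Basis. exp ((D *\<^sub>R b) \<bullet> S n \<omega>) + exp (((- D) *\<^sub>R b) \<bullet> S n \<omega>))"
      unfolding D_def by (rule ennreal_leI[OF exp_norm_le_sum_exp_inner[OF that]])
    then show "ennreal (exp (c * norm (S n \<omega>)))
        \<le> (\<Sum>b\<in>Basis. ennreal (exp ((D *\<^sub>R b) \<bullet> S n \<omega>)) + ennreal (exp (((- D) *\<^sub>R b) \<bullet> S n \<omega>)))"
      by (subst (asm) sum_ennreal[symmetric]) (auto simp: ennreal_plus)
  qed
  also have "\<dots> = (\<Sum>b\<in>Basis. ?E (D *\<^sub>R b) n + ?E ((- D) *\<^sub>R b) n)"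
    by (subst nn_integral_sum) (auto simp: nn_integral_add)
  finally show "(\<integral>\<^sup>+ \<omega>. ennreal (exp (c * norm (S n \<omega>))) \<partial>M) \<le> (\<Sum>b\<in>Basis. ?E (D *\<^sub>R b) n + ?E ((- D) *\<^sub>R b) n)" .
qed

lemma norm_tail_bound:
  "\<exists>R\<ge>0. \<forall>n\<ge>1. measure M {\<omega>\<in>space M. norm (S n \<omega>) > R * lam d n} \<le> exp (- C * lam d n)"
proof -
  obtain B where B: "B \<ge> 0" "\<And>n. n \<ge> 1 \<Longrightarrow> (\<integral>\<^sup>+ \<omega>. ennreal (exp (1 * norm (S n \<omega>))) \<partial>M) \<le> ennreal (exp (B * lam d n))"
    using exp_growth_nonneg_const[OF exp_growth_exp_norm[of 1]] by auto
  define R where "R = B + \<bar>C\<bar>"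
  have "measure M {\<omega>\<in>space M. norm (S n \<omega>) > R * lam d n} \<le> exp (- C * lam d n)" if n: "n \<ge> 1" for n
  proof -
    let ?A = "{\<omega>\<in>space M. norm (S n \<omega>) > R * lam d n}"
    have "emeasure M ?A = (\<integral>\<^sup>+ \<omega>. indicator ?A \<omega> \<partial>M)" by simp
    also have "\<dots> \<le> (\<integral>\<^sup>+ \<omega>. ennreal (exp (- R * lam d n)) * ennreal (exp (1 * norm (S n \<omega>))) \<partial>M)"
    proof (rule nn_integral_mono)
      fix \<omega>
      have "\<omega> \<in> ?A \<Longrightarrow> 0 \<le> - R * lam d n + norm (S n \<omega>)" by auto
      then have "\<omega> \<in> ?A \<Longrightarrow> 1 \<le> exp (- R * lam d n + norm (S n \<omega>))" by simp
      then show "indicator ?A \<omega> \<le> ennreal (exp (- R * lam d n)) * ennreal (exp (1 * norm (S n \<omega>)))"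
        by (cases "\<omega> \<in> ?A") (simp_all add: ennreal_leI flip: ennreal_mult exp_add)
    qed
    also have "\<dots> = ennreal (exp (- R * lam d n)) * (\<integral>\<^sup>+ \<omega>. ennreal (exp (1 * norm (S n \<omega>))) \<partial>M)"
      by (rule nn_integral_cmult) measurable
    also have "\<dots> \<le> ennreal (exp (- R * lam d n)) * ennreal (exp (B * lam d n))"
      by (intro mult_left_mono B(2)[OF n]) auto
    also have "\<dots> \<le> ennreal (exp (- C * lam d n))"
      using lam_pos[OF n, of d]
      by (auto simp: R_def exp_add[symmetric] algebra_simps intro!: ennreal_leI mult_right_mono
               simp flip: ennreal_mult)
    finally show ?thesis by (simp add: measure_def enn2real_leI)
  qed
  moreover have "R \<ge> 0" unfolding R_def using B(1) by simp
  ultimately show ?thesis by blast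
qed

lemma exp_tight: "exp_tight M S d"
  unfolding exp_tight_def
proof (intro allI impI)
  fix \<alpha> :: real
  assume "\<alpha> > 0"
  obtain R where R: "\<And>n. n \<ge> 1 \<Longrightarrow> measure M {\<omega>\<in>space M. norm (S n \<omega>) > R * lam d n} \<le> exp (- \<alpha> * lam d n)"
    using norm_tail_bound[of \<alpha>] by blast
  have "lnE (measure M {\<omega>\<in>space M. (1 / lam d n) *\<^sub>R S n \<omega> \<notin> cball 0 R}) / ereal (lam d n) \<le> - ereal \<alpha>"
    if n: "n \<ge> 1" for n
  proof -
    have l: "lam d n > 0" using lam_pos[OF n] .
    define P where "P = measure M {\<omega>\<in>space M. norm (S n \<omega>) > R * lam d n}"
    have "{\<omega>\<in>space M. (1 / lam d n) *\<^sub>R S n \<omega> \<notin> cball 0 R} = {\<omega>\<in>space M. norm (S n \<omega>) > R * lam d n}"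
      using l by (auto simp: field_simps)
    moreover have "P \<le> 0 \<or> ln P / lam d n \<le> - \<alpha>"
      using R[OF n] l unfolding P_def[symmetric]
      by (metis divide_le_eq exp_le_cancel_iff exp_ln mult_minus_left not_le)
    ultimately show ?thesis using l unfolding P_def by (auto simp: lnE_def)
  qed
  then have "limsup (\<lambda>n. lnE (measure M {\<omega>\<in>space M. (1 / lam d n) *\<^sub>R S n \<omega> \<notin> cball 0 R}) / ereal (lam d n))
      \<le> - ereal \<alpha>"
    by (intro Limsup_bounded eventually_sequentiallyI[of 1]) auto
  then show "\<exists>K. compact K \<and> limsup (\<lambda>n. lnE (measure M {\<omega>\<in>space M. (1 / lam d n) *\<^sub>R S n \<omega> \<notin> K})
      / ereal (lam d n)) \<le> - ereal \<alpha>"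
    by (intro exI[of _ "cball 0 R"]) auto
qed

end

locale lipschitz_functional = exp_moment_process M S d
  for M :: "'a measure" and S :: "nat \<Rightarrow> 'a \<Rightarrow> 'v::euclidean_space" and d :: nat +
  fixes f :: "'v \<Rightarrow> real" and L :: real
  assumes lipschitz: "L-lipschitz_on UNIV f" and d_ge_1: "d \<ge> 1"
begin

lemma L_nonneg: "L \<ge> 0"
  using lipschitz by (simp add: lipschitz_on_def)

lemma f_measurable[measurable]: "f \<in> borel_measurable borel"
  by (intro borel_measurable_continuous_onI lipschitz_on_continuous_on[OF lipschitz])

definition Z :: "nat \<Rightarrow> real \<Rightarrow> ennreal" where
  "Z n \<mu> = (\<integral>\<^sup>+ \<omega>. ennreal (exp (\<mu> * f ((1 / \<mu>) *\<^sub>R S n \<omega>))) \<partial>M)"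

definition pressure :: "nat \<Rightarrow> real" where
  "pressure n = ln (enn2real (Z n (lam d n))) / lam d n"

lemma Z_lower:
  "\<exists>\<beta>\<ge>0. \<forall>n\<ge>1. \<forall>\<mu>\<ge>lam d n. ennreal (exp (- \<beta> * \<mu>)) \<le> Z n \<mu>"
proof -
  obtain R where R0: "R \<ge> 0"
    and tail: "\<And>n. n \<ge> 1 \<Longrightarrow> measure M {\<omega>\<in>space M. norm (S n \<omega>) > R * lam d n} \<le> exp (- 1 * lam d n)"
    using norm_tail_bound[of 1] by blast
  define \<beta> where "\<beta> = \<bar>f 0\<bar> + L * R + 1"
  have "ennreal (exp (- \<beta> * \<mu>)) \<le> Z n \<mu>" if n: "n \<ge> 1" and \<mu>: "\<mu> \<ge> lam d n" for n \<mu>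
  proof -
    have l: "lam d n \<ge> 1" using lam_ge_one[OF n] .
    define A where "A = {\<omega>\<in>space M. norm (S n \<omega>) \<le> R * \<mu>}"
    have [measurable]: "A \<in> sets M" unfolding A_def by measurable
    have "prob (space M - A) \<le> prob {\<omega>\<in>space M. norm (S n \<omega>) > R * lam d n}"
    proof (intro finite_measure_mono)
      show "space M - A \<subseteq> {\<omega>\<in>space M. norm (S n \<omega>) > R * lam d n}"
        using mult_left_mono[OF \<mu> R0] by (auto simp: A_def)
    qed measurable
    also have "\<dots> \<le> 1 / 2" using tail[OF n] exp_neg_le_half[OF l] by simp
    finally have "exp (- \<mu>) \<le> prob A" using prob_compl[of A] exp_neg_le_half[of \<mu>] l \<mu> by simp
    then have "exp (- (\<bar>f 0\<bar> + L * R) * \<mu>) * exp (- \<mu>) \<le> exp (- (\<bar>f 0\<bar> + L * R) * \<mu>) * prob A"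
      by (intro mult_left_mono) auto
    moreover have "exp (- \<beta> * \<mu>) = exp (- (\<bar>f 0\<bar> + L * R) * \<mu>) * exp (- \<mu>)"
      by (simp add: \<beta>_def algebra_simps flip: exp_add)
    ultimately have "ennreal (exp (- \<beta> * \<mu>)) \<le> ennreal (exp (- (\<bar>f 0\<bar> + L * R) * \<mu>)) * emeasure M A"
      by (simp add: emeasure_eq_measure ennreal_leI flip: ennreal_mult)
    also have "\<dots> = (\<integral>\<^sup>+ \<omega>. ennreal (exp (- (\<bar>f 0\<bar> + L * R) * \<mu>)) * indicator A \<omega> \<partial>M)"
      by (simp add: nn_integral_cmult_indicator)
    also have "\<dots> \<le> Z n \<mu>"
      unfolding Z_def
    proof (rule nn_integral_mono)
      fix \<omega>
      have "- (\<bar>f 0\<bar> + L * R) * \<mu> \<le> \<mu> * f ((1 / \<mu>) *\<^sub>R S n \<omega>)" if "\<omega> \<in> A"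
      proof -
        have "L * norm ((1 / \<mu>) *\<^sub>R S n \<omega>) \<le> L * R"
          using that l \<mu> L_nonneg by (intro mult_left_mono) (auto simp: A_def divide_le_eq)
        then have "- (\<bar>f 0\<bar> + L * R) \<le> f ((1 / \<mu>) *\<^sub>R S n \<omega>)"
          using lipschitz_on_UNIV_lower[OF lipschitz, of 0 "(1 / \<mu>) *\<^sub>R S n \<omega>"] by auto
        then show ?thesis using l \<mu> by (simp add: mult.commute mult_left_mono)
      qed
      then show "ennreal (exp (- (\<bar>f 0\<bar> + L * R) * \<mu>)) * indicator A \<omega> \<le> ennreal (exp (\<mu> * f ((1 / \<mu>) *\<^sub>R S n \<omega>)))"
        by (cases "\<omega> \<in> A") (auto intro: ennreal_leI)
    qed
    finally show ?thesis .
  qed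
  moreover have "\<beta> \<ge> 0" unfolding \<beta>_def using R0 L_nonneg by simp
  ultimately show ?thesis by blast
qed

lemma exp_moment_upper:
  assumes q: "q \<ge> 0"
  shows "\<exists>\<gamma>\<ge>0. \<forall>n\<ge>1. \<forall>\<mu>\<ge>lam d n.
           (\<integral>\<^sup>+ \<omega>. ennreal (exp (q * (\<mu> * f ((1 / \<mu>) *\<^sub>R S n \<omega>)))) \<partial>M) \<le> ennreal (exp (\<gamma> * \<mu>))"
proof -
  obtain B where B0: "B \<ge> 0"
    and B: "\<And>n. n \<ge> 1 \<Longrightarrow> (\<integral>\<^sup>+ \<omega>. ennreal (exp ((q * L) * norm (S n \<omega>))) \<partial>M) \<le> ennreal (exp (B * lam d n))"
    using exp_growth_nonneg_const[OF exp_growth_exp_norm[of "q * L"]] q L_nonneg by auto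
  define \<gamma> where "\<gamma> = q * \<bar>f 0\<bar> + B"
  have "(\<integral>\<^sup>+ \<omega>. ennreal (exp (q * (\<mu> * f ((1 / \<mu>) *\<^sub>R S n \<omega>)))) \<partial>M) \<le> ennreal (exp (\<gamma> * \<mu>))"
    if n: "n \<ge> 1" and \<mu>: "\<mu> \<ge> lam d n" for n \<mu>
  proof -
    have \<mu>_pos: "\<mu> > 0" using lam_pos[OF n, of d] \<mu> by linarith
    have "(\<integral>\<^sup>+ \<omega>. ennreal (exp (q * (\<mu> * f ((1 / \<mu>) *\<^sub>R S n \<omega>)))) \<partial>M)
       \<le> (\<integral>\<^sup>+ \<omega>. ennreal (exp (q * \<bar>f 0\<bar> * \<mu>)) * ennreal (exp ((q * L) * norm (S n \<omega>))) \<partial>M)"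
    proof (rule nn_integral_mono)
      fix \<omega>
      have "f ((1 / \<mu>) *\<^sub>R S n \<omega>) \<le> \<bar>f 0\<bar> + L * norm (S n \<omega>) / \<mu>"
        using lipschitz_on_UNIV_upper[OF lipschitz, of "(1 / \<mu>) *\<^sub>R S n \<omega>" 0] \<mu>_pos by simp
      then have "\<mu> * f ((1 / \<mu>) *\<^sub>R S n \<omega>) \<le> \<bar>f 0\<bar> * \<mu> + L * norm (S n \<omega>)"
        using \<mu>_pos by (simp add: field_simps)
      then have "q * (\<mu> * f ((1 / \<mu>) *\<^sub>R S n \<omega>)) \<le> q * (\<bar>f 0\<bar> * \<mu> + L * norm (S n \<omega>))"
        by (rule mult_left_mono[OF _ q])
      then have "q * (\<mu> * f ((1 / \<mu>) *\<^sub>R S n \<omega>)) \<le> q * \<bar>f 0\<bar> * \<mu> + (q * L) * norm (S n \<omega>)"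
        by (simp add: algebra_simps)
      then show "ennreal (exp (q * (\<mu> * f ((1 / \<mu>) *\<^sub>R S n \<omega>))))
          \<le> ennreal (exp (q * \<bar>f 0\<bar> * \<mu>)) * ennreal (exp ((q * L) * norm (S n \<omega>)))"
        by (simp add: ennreal_leI flip: ennreal_mult exp_add)
    qed
    also have "\<dots> = ennreal (exp (q * \<bar>f 0\<bar> * \<mu>)) * (\<integral>\<^sup>+ \<omega>. ennreal (exp ((q * L) * norm (S n \<omega>))) \<partial>M)"
      by (rule nn_integral_cmult) measurable
    also have "\<dots> \<le> ennreal (exp (q * \<bar>f 0\<bar> * \<mu>)) * ennreal (exp (B * \<mu>))"
      using B[OF n] B0 \<mu> by (intro mult_left_mono) (auto intro: order_trans ennreal_leI mult_left_mono)
    also have "\<dots> = ennreal (exp (\<gamma> * \<mu>))"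
      by (simp add: \<gamma>_def algebra_simps flip: ennreal_mult exp_add)
    finally show ?thesis .
  qed
  moreover have "\<gamma> \<ge> 0" unfolding \<gamma>_def using B0 q by simp
  ultimately show ?thesis by blast
qed

text \<open>
  The bounds are required for all \<open>\<mu> \<ge> |\<Lambda>\<^sup>n|\<close> because \<open>Z n\<close> is also evaluated at the volume
  of a larger box.
\<close>

definition moment_constants :: "real \<Rightarrow> real \<Rightarrow> real \<Rightarrow> bool" where
  "moment_constants \<beta> \<gamma>1 \<gamma>2 \<longleftrightarrow> \<beta> \<ge> 0 \<and> \<gamma>1 \<ge> 0 \<and> \<gamma>2 \<ge> 0 \<and> (\<forall>n\<ge>1. \<forall>\<mu>\<ge>lam d n.
     ennreal (exp (- \<beta> * \<mu>)) \<le> Z n \<mu> \<and> Z n \<mu> \<le> ennreal (exp (\<gamma>1 * \<mu>)) \<and>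
     (\<integral>\<^sup>+ \<omega>. ennreal ((exp (\<mu> * f ((1 / \<mu>) *\<^sub>R S n \<omega>)))\<^sup>2) \<partial>M) \<le> ennreal (exp (\<gamma>2 * \<mu>)))"

lemma moment_constants_exist: "\<exists>\<beta> \<gamma>1 \<gamma>2. moment_constants \<beta> \<gamma>1 \<gamma>2"
proof -
  obtain \<beta> where "\<beta> \<ge> 0" "\<forall>n\<ge>1. \<forall>\<mu>\<ge>lam d n. ennreal (exp (- \<beta> * \<mu>)) \<le> Z n \<mu>"
    using Z_lower by blast
  moreover obtain \<gamma>1 where "\<gamma>1 \<ge> 0" "\<forall>n\<ge>1. \<forall>\<mu>\<ge>lam d n.
      (\<integral>\<^sup>+ \<omega>. ennreal (exp (1 * (\<mu> * f ((1 / \<mu>) *\<^sub>R S n \<omega>)))) \<partial>M) \<le> ennreal (exp (\<gamma>1 * \<mu>))"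
    using exp_moment_upper[of 1] by auto
  moreover obtain \<gamma>2 where "\<gamma>2 \<ge> 0" "\<forall>n\<ge>1. \<forall>\<mu>\<ge>lam d n.
      (\<integral>\<^sup>+ \<omega>. ennreal (exp (2 * (\<mu> * f ((1 / \<mu>) *\<^sub>R S n \<omega>)))) \<partial>M) \<le> ennreal (exp (\<gamma>2 * \<mu>))"
    using exp_moment_upper[of 2] by auto
  ultimately have "moment_constants \<beta> \<gamma>1 \<gamma>2"
    unfolding moment_constants_def Z_def by (simp add: exp_double[symmetric])
  then show ?thesis by blast
qed

lemma moment_constantsD:
  assumes "moment_constants \<beta> \<gamma>1 \<gamma>2"
  shows "\<beta> \<ge> 0" "\<gamma>1 \<ge> 0" "\<gamma>2 \<ge> 0"
    and "n \<ge> 1 \<Longrightarrow> \<mu> \<ge> lam d n \<Longrightarrow> ennreal (exp (- \<beta> * \<mu>)) \<le> Z n \<mu>"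
    and "n \<ge> 1 \<Longrightarrow> \<mu> \<ge> lam d n \<Longrightarrow>
      (\<integral>\<^sup>+ \<omega>. ennreal ((exp (\<mu> * f ((1 / \<mu>) *\<^sub>R S n \<omega>)))\<^sup>2) \<partial>M) \<le> ennreal (exp (\<gamma>2 * \<mu>))"
    and "n \<ge> 1 \<Longrightarrow> \<mu> \<ge> lam d n \<Longrightarrow> Z n \<mu> \<noteq> \<infinity>"
    and "n \<ge> 1 \<Longrightarrow> \<mu> \<ge> lam d n \<Longrightarrow> 0 < enn2real (Z n \<mu>)"
    and "n \<ge> 1 \<Longrightarrow> \<mu> \<ge> lam d n \<Longrightarrow> enn2real (Z n \<mu>) \<le> exp (\<gamma>1 * \<mu>)"
proof -
  show "\<beta> \<ge> 0" "\<gamma>1 \<ge> 0" "\<gamma>2 \<ge> 0" using assms unfolding moment_constants_def by auto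
  assume "n \<ge> 1" "\<mu> \<ge> lam d n"
  then have lower: "ennreal (exp (- \<beta> * \<mu>)) \<le> Z n \<mu>" and upper: "Z n \<mu> \<le> ennreal (exp (\<gamma>1 * \<mu>))"
    and "(\<integral>\<^sup>+ \<omega>. ennreal ((exp (\<mu> * f ((1 / \<mu>) *\<^sub>R S n \<omega>)))\<^sup>2) \<partial>M) \<le> ennreal (exp (\<gamma>2 * \<mu>))"
    using assms unfolding moment_constants_def by auto
  then show "ennreal (exp (- \<beta> * \<mu>)) \<le> Z n \<mu>"
    "(\<integral>\<^sup>+ \<omega>. ennreal ((exp (\<mu> * f ((1 / \<mu>) *\<^sub>R S n \<omega>)))\<^sup>2) \<partial>M) \<le> ennreal (exp (\<gamma>2 * \<mu>))" by auto
  show fin: "Z n \<mu> \<noteq> \<infinity>" using le_less_trans[OF upper ennreal_less_top] by simp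
  have "exp (- \<beta> * \<mu>) \<le> enn2real (Z n \<mu>)"
    using enn2real_mono[OF lower] fin by (simp add: less_top)
  then show "0 < enn2real (Z n \<mu>)" by (meson exp_gt_zero less_le_trans)
  show "enn2real (Z n \<mu>) \<le> exp (\<gamma>1 * \<mu>)"
    using enn2real_mono[OF upper ennreal_less_top] by simp
qed

lemma moment_constants_power:
  assumes "moment_constants \<beta> \<gamma>1 \<gamma>2" "n \<ge> 1" "\<mu> \<ge> lam d n"
  shows "ennreal (exp (- \<beta> * (real p * \<mu>))) \<le> Z n \<mu> ^ p"
    and "(\<integral>\<^sup>+ \<omega>. ennreal ((exp (\<mu> * f ((1 / \<mu>) *\<^sub>R S n \<omega>)))\<^sup>2) \<partial>M) ^ p
           \<le> ennreal (exp (\<gamma>2 * (real p * \<mu>)))"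
proof -
  have "ennreal (exp (- \<beta> * \<mu>)) ^ p \<le> Z n \<mu> ^ p"
    using moment_constantsD(4)[OF assms] by (rule power_mono) simp
  then show "ennreal (exp (- \<beta> * (real p * \<mu>))) \<le> Z n \<mu> ^ p"
    by (simp add: ennreal_power mult_ac flip: exp_of_nat_mult)
  have "(\<integral>\<^sup>+ \<omega>. ennreal ((exp (\<mu> * f ((1 / \<mu>) *\<^sub>R S n \<omega>)))\<^sup>2) \<partial>M) ^ p \<le> ennreal (exp (\<gamma>2 * \<mu>)) ^ p"
    using moment_constantsD(5)[OF assms] by (rule power_mono) simp
  then show "(\<integral>\<^sup>+ \<omega>. ennreal ((exp (\<mu> * f ((1 / \<mu>) *\<^sub>R S n \<omega>)))\<^sup>2) \<partial>M) ^ p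
      \<le> ennreal (exp (\<gamma>2 * (real p * \<mu>)))"
    by (simp add: ennreal_power mult_ac flip: exp_of_nat_mult)
qed

lemma Gamma_eq_pressure:
  assumes "n \<ge> 1"
  shows "Gamma M d S n f / ereal (lam d n) = ereal (pressure n)"
proof -
  obtain \<beta> \<gamma>1 \<gamma>2 where mc: "moment_constants \<beta> \<gamma>1 \<gamma>2" using moment_constants_exist by blast
  have "Gamma M d S n f = ereal (ln (enn2real (Z n (lam d n))))"
    using moment_constantsD(6,7)[OF mc assms order_refl]
    unfolding Gamma_def Z_def[symmetric] lnEnn_def lnE_def by auto
  then show ?thesis unfolding pressure_def using lam_pos[OF assms, of d] by simp
qed

lemma pressure_le:
  assumes "moment_constants \<beta> \<gamma>1 \<gamma>2" "n \<ge> 1"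
  shows "pressure n \<le> \<gamma>1"
proof -
  have "ln (enn2real (Z n (lam d n))) \<le> \<gamma>1 * lam d n"
    using moment_constantsD(7,8)[OF assms order_refl] by (metis exp_le_cancel_iff exp_ln)
  then show ?thesis unfolding pressure_def using lam_pos[OF assms(2)] by (simp add: divide_le_eq)
qed

lemma pressure_compare:
  assumes mc: "moment_constants \<beta> \<gamma>1 \<gamma>2"
    and n: "n \<ge> 1" and n': "n' \<ge> 1" and l': "lam d n \<le> l'" "lam d n' \<le> l'"
    and G[measurable]: "G \<in> sets M"
    and on_G: "\<And>\<omega>. \<omega> \<in> G \<Longrightarrow> norm (S n \<omega>) \<le> R * lam d n \<and> norm (S n' \<omega> - S n \<omega>) \<le> \<eta> * lam d n"
    and R: "R \<ge> 0" and \<eta>: "\<eta> \<ge> 0"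
    and small: "measure M (space M - G) \<le> exp (- (2 * \<beta> + \<gamma>2 + 2) * lam d n)"
  shows "pressure n - (l' / lam d n - 1) * (\<bar>f 0\<bar> + L * (2 * R + \<eta>) + \<gamma>1) - L * \<eta> - ln 2 / lam d n
           \<le> ln (enn2real (Z n' l')) / l'"
proof -
  define l where "l = lam d n"
  have l1: "l \<ge> 1" unfolding l_def using lam_ge_one[OF n] .
  define \<delta> where "\<delta> = (l' / l - 1) * (\<bar>f 0\<bar> + L * (2 * R + \<eta>)) + L * \<eta>"
  define X where "X \<omega> = exp (l * f ((1 / l) *\<^sub>R S n \<omega>))" for \<omega>
  define Y where "Y \<omega> = exp (l' * f ((1 / l') *\<^sub>R S n' \<omega>))" for \<omega>
  have [measurable]: "X \<in> borel_measurable M" "Y \<in> borel_measurable M" unfolding X_def Y_def by measurable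
  have XY: "X \<omega> * exp (- l * \<delta>) \<le> Y \<omega>" if "\<omega> \<in> G" for \<omega>
  proof -
    have "l * f ((1 / l) *\<^sub>R S n \<omega>) - (l' - l) * (\<bar>f 0\<bar> + L * (2 * R + \<eta>)) - l * L * \<eta>
        \<le> l' * f ((1 / l') *\<^sub>R S n' \<omega>)"
      by (rule lipschitz_rescaled_lower[OF lipschitz _ _ _ _ R \<eta>]) (use on_G[OF that] l1 l' in \<open>auto simp: l_def\<close>)
    moreover have "l * \<delta> = (l' - l) * (\<bar>f 0\<bar> + L * (2 * R + \<eta>)) + l * L * \<eta>"
      using l1 unfolding \<delta>_def by (simp add: field_simps)
    ultimately have "l * f ((1 / l) *\<^sub>R S n \<omega>) - l * \<delta> \<le> l' * f ((1 / l') *\<^sub>R S n' \<omega>)"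
      by linarith
    then show ?thesis unfolding X_def Y_def by (simp add: mult.commute flip: exp_add)
  qed
  have "ln (enn2real (\<integral>\<^sup>+ \<omega>. ennreal (X \<omega>) \<partial>M)) / l - \<delta> - ln 2 / l
      \<le> ln (enn2real (\<integral>\<^sup>+ \<omega>. ennreal (Y \<omega>) \<partial>M)) / l"
  proof (rule ln_nn_integral_ge_on_good_event[where \<beta> = \<beta> and \<gamma> = \<gamma>2 and C = "2 * \<beta> + \<gamma>2 + 2"])
    show "ennreal (exp (- \<beta> * l)) \<le> (\<integral>\<^sup>+ \<omega>. ennreal (X \<omega>) \<partial>M)"
      using moment_constantsD(4)[OF mc n order_refl] unfolding X_def Z_def l_def .
    show "(\<integral>\<^sup>+ \<omega>. ennreal ((X \<omega>)\<^sup>2) \<partial>M) \<le> ennreal (exp (\<gamma>2 * l))"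
      using moment_constantsD(5)[OF mc n order_refl] unfolding X_def l_def .
    show "(\<integral>\<^sup>+ \<omega>. ennreal (Y \<omega>) \<partial>M) \<noteq> \<infinity>"
      using moment_constantsD(6)[OF mc n' l'(2)] unfolding Y_def Z_def .
  qed (use XY small l1 in \<open>auto simp: X_def Y_def l_def\<close>)
  then have "ln (enn2real (Z n l)) / l - \<delta> - ln 2 / l \<le> ln (enn2real (Z n' l')) / l"
    unfolding X_def Y_def Z_def .
  moreover have "ln (enn2real (Z n' l')) / l - \<gamma>1 * (l' / l - 1) \<le> ln (enn2real (Z n' l')) / l'"
    using l1 l' moment_constantsD(7,8)[OF mc n' l'(2)]
    by (intro ln_div_ge_of_le_exp) (auto simp: l_def field_simps)
  ultimately show ?thesis unfolding pressure_def \<delta>_def l_def by (simp add: algebra_simps)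
qed

lemma pressure_larger_volume:
  assumes "\<epsilon> > 0"
  shows "\<exists>J. \<forall>j\<ge>J. pressure j - \<epsilon> \<le> ln (enn2real (Z j (lam d (j + r)))) / lam d (j + r)"
proof -
  obtain \<beta> \<gamma>1 \<gamma>2 where mc: "moment_constants \<beta> \<gamma>1 \<gamma>2" using moment_constants_exist by blast
  obtain R where R: "R \<ge> 0" and tail: "\<And>n. n \<ge> 1 \<Longrightarrow>
      measure M {\<omega>\<in>space M. norm (S n \<omega>) > R * lam d n} \<le> exp (- (2 * \<beta> + \<gamma>2 + 2) * lam d n)"
    using norm_tail_bound by blast
  define K where "K = \<bar>f 0\<bar> + L * (2 * R) + \<gamma>1"
  have "((\<lambda>j. (lam d (j + r) / lam d j - 1) * K + ln 2 / lam d j) \<longlongrightarrow> (1 - 1) * K + 0) sequentially"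
    by (intro tendsto_intros lam_ratio_tendsto_1[where c = r] tendsto_divide_lam_0[OF d_ge_1])
      (auto simp: filterlim_ident)
  then have close: "eventually (\<lambda>j. (lam d (j + r) / lam d j - 1) * K + ln 2 / lam d j < \<epsilon>) sequentially"
    using assms by (intro order_tendstoD(2)) auto
  have compare: "pressure j - (lam d (j + r) / lam d j - 1) * K - ln 2 / lam d j
      \<le> ln (enn2real (Z j (lam d (j + r)))) / lam d (j + r)" if j: "j \<ge> 1" for j
  proof -
    have "space M - {\<omega>\<in>space M. norm (S j \<omega>) \<le> R * lam d j} = {\<omega>\<in>space M. norm (S j \<omega>) > R * lam d j}"
      by auto
    then have "pressure j - (lam d (j + r) / lam d j - 1) * (\<bar>f 0\<bar> + L * (2 * R + 0) + \<gamma>1) - L * 0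
        - ln 2 / lam d j \<le> ln (enn2real (Z j (lam d (j + r)))) / lam d (j + r)"
      using tail[OF j]
      by (intro pressure_compare[where G = "{\<omega>\<in>space M. norm (S j \<omega>) \<le> R * lam d j}",
            OF mc j j lam_mono lam_mono _ _ R order_refl]) auto
    then show ?thesis by (simp add: K_def)
  qed
  have "eventually (\<lambda>j. pressure j - \<epsilon> \<le> ln (enn2real (Z j (lam d (j + r)))) / lam d (j + r))
      sequentially"
    using close eventually_ge_at_top[of 1]
  proof eventually_elim
    case (elim j)
    with compare[of j] show ?case by linarith
  qed
  then show ?thesis unfolding eventually_sequentially .
qed

lemma regular_good_event:
  assumes reg: "exp_regular M S d" and k: "k \<ge> 1" and \<eta>: "\<eta> > 0"
  defines "N n \<equiv> (2 * block_index k n + 1) * k"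
  shows "\<exists>R\<ge>0. \<exists>N0. \<forall>n\<ge>N0. measure M (space M -
      {\<omega>\<in>space M. norm (S (N n) \<omega>) \<le> R * lam d (N n) \<and> norm (S n \<omega> - S (N n) \<omega>) \<le> \<eta> * lam d n})
        \<le> exp (- C * lam d (N n))"
proof -
  define C' where "C' = \<bar>C\<bar> + 1"
  obtain R where R: "R \<ge> 0" and tail: "\<And>n. n \<ge> 1 \<Longrightarrow>
      measure M {\<omega>\<in>space M. norm (S n \<omega>) > R * lam d n} \<le> exp (- C' * lam d n)"
    using norm_tail_bound by blast
  have "C' > 0" unfolding C'_def by simp
  then obtain N0 where N0: "\<forall>n\<ge>N0. \<forall>m. (2 * m + 1) * k \<le> n \<and> n < (2 * m + 3) * k \<longrightarrow>
      measure M {\<omega>\<in>space M. norm (S n \<omega> - S ((2 * m + 1) * k) \<omega>) > \<eta> * lam d n} \<le> exp (- C' * lam d n)"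
    using reg[unfolded exp_regular_def, rule_format, OF k \<eta>] by blast
  have "measure M (space M -
      {\<omega>\<in>space M. norm (S (N n) \<omega>) \<le> R * lam d (N n) \<and> norm (S n \<omega> - S (N n) \<omega>) \<le> \<eta> * lam d n})
        \<le> exp (- C * lam d (N n))" if n: "n \<ge> max N0 k" for n
  proof -
    have N: "N n \<ge> 1" "N n \<le> n" using block_index_bounds(1)[OF k, of n] n k unfolding N_def by auto
    have l: "lam d (N n) \<ge> 1" "lam d (N n) \<le> lam d n" using lam_ge_one[OF N(1)] lam_mono[OF N(2)] .
    have "measure M (space M -
        {\<omega>\<in>space M. norm (S (N n) \<omega>) \<le> R * lam d (N n) \<and> norm (S n \<omega> - S (N n) \<omega>) \<le> \<eta> * lam d n})
      \<le> measure M ({\<omega>\<in>space M. norm (S (N n) \<omega>) > R * lam d (N n)}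
           \<union> {\<omega>\<in>space M. norm (S n \<omega> - S (N n) \<omega>) > \<eta> * lam d n})"
      by (intro finite_measure_mono) auto
    also have "\<dots> \<le> measure M {\<omega>\<in>space M. norm (S (N n) \<omega>) > R * lam d (N n)}
        + measure M {\<omega>\<in>space M. norm (S n \<omega> - S (N n) \<omega>) > \<eta> * lam d n}"
      by (rule measure_subadditive) measurable
    also have "\<dots> \<le> exp (- C' * lam d (N n)) + exp (- C' * lam d n)"
    proof (rule add_mono)
      show "measure M {\<omega>\<in>space M. norm (S n \<omega> - S (N n) \<omega>) > \<eta> * lam d n} \<le> exp (- C' * lam d n)"
        using N0 block_index_bounds[OF k, of n] n unfolding N_def by simp
    qed (rule tail[OF N(1)])
    also have "\<dots> \<le> 2 * exp (- C' * lam d (N n))"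
      using l(2) \<open>C' > 0\<close> by (simp add: mult_left_mono)
    also have "\<dots> \<le> exp (- C * lam d (N n))"
    proof -
      have "2 * exp (- C' * lam d (N n)) = 2 * exp (- lam d (N n)) * exp ((- \<bar>C\<bar>) * lam d (N n))"
        by (simp add: C'_def algebra_simps flip: exp_add)
      also have "\<dots> \<le> exp ((- \<bar>C\<bar>) * lam d (N n))" using exp_neg_le_half[OF l(1)] by simp
      also have "\<dots> \<le> exp (- C * lam d (N n))" using l(1) by (intro exp_mono mult_right_mono) auto
      finally show ?thesis .
    qed
    finally show ?thesis .
  qed
  then show ?thesis using R by blast
qed

lemma pressure_regular:
  assumes reg: "exp_regular M S d" and k: "k \<ge> 1" and \<epsilon>: "\<epsilon> > 0"
  shows "\<exists>N. \<forall>n\<ge>N. pressure ((2 * block_index k n + 1) * k) - \<epsilon> \<le> pressure n"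
proof -
  define N where "N n = (2 * block_index k n + 1) * k" for n
  obtain \<beta> \<gamma>1 \<gamma>2 where mc: "moment_constants \<beta> \<gamma>1 \<gamma>2" using moment_constants_exist by blast
  define \<eta> where "\<eta> = \<epsilon> / (2 * (L + 1))"
  have \<eta>: "\<eta> > 0" "L * \<eta> \<le> \<epsilon> / 2" unfolding \<eta>_def using \<epsilon> L_nonneg by (simp_all add: field_simps)
  have "\<eta> / 2 > 0" using \<eta> by simp
  from regular_good_event[OF reg k this, where C = "2 * \<beta> + \<gamma>2 + 2"]
  obtain R N0 where R: "R \<ge> 0" and good: "\<And>n. n \<ge> N0 \<Longrightarrow> measure M (space M -
      {\<omega>\<in>space M. norm (S (N n) \<omega>) \<le> R * lam d (N n) \<and> norm (S n \<omega> - S (N n) \<omega>) \<le> \<eta> / 2 * lam d n})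
        \<le> exp (- (2 * \<beta> + \<gamma>2 + 2) * lam d (N n))"
    unfolding N_def by blast
  define K where "K = \<bar>f 0\<bar> + L * (2 * R + \<eta>) + \<gamma>1"
  have N_lim: "filterlim N at_top sequentially" unfolding N_def by (rule filterlim_block_at_top[OF k])
  have "eventually (\<lambda>n. N n \<le> n \<and> n \<le> N n + 2 * k) sequentially"
    using eventually_ge_at_top[of k]
  proof eventually_elim
    case (elim n)
    show ?case using block_index_bounds[OF k elim] by (auto simp: N_def algebra_simps)
  qed
  then have \<rho>: "((\<lambda>n. lam d n / lam d (N n)) \<longlongrightarrow> 1) sequentially"
    by (rule lam_ratio_tendsto_1[OF _ N_lim])
  have "((\<lambda>n. (lam d n / lam d (N n) - 1) * K + ln 2 / lam d (N n)) \<longlongrightarrow> (1 - 1) * K + 0) sequentially"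
    by (intro tendsto_intros \<rho> tendsto_divide_lam_0[OF d_ge_1 N_lim])
  then have close: "eventually (\<lambda>n. (lam d n / lam d (N n) - 1) * K + ln 2 / lam d (N n) < \<epsilon> / 2) sequentially"
    using \<epsilon> by (intro order_tendstoD(2)) auto
  have ratio: "eventually (\<lambda>n. lam d n / lam d (N n) < 2) sequentially"
    using \<rho> by (intro order_tendstoD(2)) auto
  have "eventually (\<lambda>n. pressure (N n) - \<epsilon> \<le> pressure n) sequentially"
    using close ratio eventually_ge_at_top[of "max N0 k"]
  proof eventually_elim
    case (elim n)
    have n: "n \<ge> 1" "N n \<ge> 1" "N n \<le> n"
      using elim(3) k block_index_bounds(1)[OF k, of n] unfolding N_def by auto
    have l: "lam d (N n) > 0" "lam d (N n) \<le> lam d n" using lam_pos[OF n(2)] lam_mono[OF n(3)] .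
    then have half: "\<eta> / 2 * lam d n \<le> \<eta> * lam d (N n)" using elim(2) \<eta> by (simp add: field_simps)
    have "pressure (N n) - (lam d n / lam d (N n) - 1) * K - L * \<eta> - ln 2 / lam d (N n)
        \<le> ln (enn2real (Z n (lam d n))) / lam d n"
      unfolding K_def
    proof (rule pressure_compare[OF mc n(2) n(1) l(2) order_refl _ _ R])
      show "measure M (space M -
          {\<omega>\<in>space M. norm (S (N n) \<omega>) \<le> R * lam d (N n) \<and> norm (S n \<omega> - S (N n) \<omega>) \<le> \<eta> / 2 * lam d n})
        \<le> exp (- (2 * \<beta> + \<gamma>2 + 2) * lam d (N n))"
        using good[of n] elim(3) by simp
    qed (use half \<eta>(1) in \<open>auto intro: order_trans[OF _ half]\<close>)
    then show ?case using elim(1) \<eta>(2) unfolding pressure_def by linarith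
  qed
  then show ?thesis unfolding eventually_sequentially N_def .
qed

lemma pressure_block_lower:
  fixes S' :: "('d::finite \<Rightarrow> int) \<Rightarrow> 'a \<Rightarrow> 'v"
  assumes mc: "moment_constants \<beta> \<gamma>1 \<gamma>2" and conc: "concave_on UNIV f"
    and indep: "indep_vars (\<lambda>_. borel) S' UNIV" and distr: "\<And>z. distr M borel (S' z) = distr M borel (S j)"
    and d: "d = CARD('d)" and j: "1 \<le> j" "j \<le> k"
    and small: "measure M {\<omega>\<in>space M. norm (S ((2 * m + 1) * k) \<omega> - (\<Sum>z\<in>box_pts m. S' z \<omega>))
                  > e * lam d ((2 * m + 1) * k)} \<le> exp (- (2 * \<beta> + \<gamma>2 + 2) * lam d ((2 * m + 1) * k))"
  shows "ln (enn2real (Z j (lam d k))) / lam d k - L * e - ln 2 / lam d ((2 * m + 1) * k)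
           \<le> pressure ((2 * m + 1) * k)"
proof -
  define N where "N = (2 * m + 1) * k"
  define B where "B = (box_pts m :: ('d \<Rightarrow> int) set)"
  define p where "p = card B"
  have B: "finite B" "B \<noteq> {}" and p: "real p \<ge> 1" and lN: "lam d N = real p * lam d k"
    using box_pts_volume[OF d] unfolding N_def B_def p_def by auto
  have lk: "lam d k \<ge> 1" "lam d j \<le> lam d k" using j lam_ge_one[of k] lam_mono[OF j(2)] by auto
  have lN1: "lam d N \<ge> 1" unfolding lN using p lk(1) mult_mono[of 1 "real p" 1 "lam d k"] by simp
  have [measurable]: "S' z \<in> borel_measurable M" for z using indep unfolding indep_vars_def by auto
  define h where "h v = exp (lam d k * f ((1 / lam d k) *\<^sub>R v))" for v
  define X where "X \<omega> = (\<Prod>z\<in>B. h (S' z \<omega>))" for \<omega>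
  define Y where "Y \<omega> = exp (lam d N * f ((1 / lam d N) *\<^sub>R S N \<omega>))" for \<omega>
  have [measurable]: "h \<in> borel_measurable borel" "X \<in> borel_measurable M" "Y \<in> borel_measurable M"
    unfolding h_def X_def Y_def by measurable
  define G where "G = {\<omega>\<in>space M. norm (S N \<omega> - (\<Sum>z\<in>B. S' z \<omega>)) \<le> e * lam d N}"
  have XY: "X \<omega> * exp (- lam d N * (L * e)) \<le> Y \<omega>" if "\<omega> \<in> G" for \<omega>
  proof -
    have "(\<Sum>z\<in>B. lam d k * f ((1 / lam d k) *\<^sub>R S' z \<omega>)) - lam d N * (L * e)
        \<le> lam d N * f ((1 / lam d N) *\<^sub>R S N \<omega>)"
      using that lk by (intro concave_lipschitz_sum_lower[OF conc lipschitz B]) (auto simp: G_def lN p_def)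
    moreover have "X \<omega> = exp (\<Sum>z\<in>B. lam d k * f ((1 / lam d k) *\<^sub>R S' z \<omega>))"
      unfolding X_def h_def by (simp add: exp_sum[OF B(1)])
    ultimately show ?thesis unfolding Y_def by (simp flip: exp_add)
  qed
  have EX: "(\<integral>\<^sup>+ \<omega>. ennreal (X \<omega>) \<partial>M) = Z j (lam d k) ^ p"
    "(\<integral>\<^sup>+ \<omega>. ennreal ((X \<omega>)\<^sup>2) \<partial>M) = (\<integral>\<^sup>+ \<omega>. ennreal ((h (S j \<omega>))\<^sup>2) \<partial>M) ^ p"
    unfolding X_def p_def Z_def h_def[symmetric] prod_power_distrib
    by (rule nn_integral_prod_iid[OF indep]; use distr B in \<open>auto simp: h_def\<close>)+
  have "ln (enn2real (\<integral>\<^sup>+ \<omega>. ennreal (X \<omega>) \<partial>M)) / lam d N - L * e - ln 2 / lam d N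
      \<le> ln (enn2real (\<integral>\<^sup>+ \<omega>. ennreal (Y \<omega>) \<partial>M)) / lam d N"
  proof (rule ln_nn_integral_ge_on_good_event[where \<beta> = \<beta> and \<gamma> = \<gamma>2 and C = "2 * \<beta> + \<gamma>2 + 2"])
    show "ennreal (exp (- \<beta> * lam d N)) \<le> (\<integral>\<^sup>+ \<omega>. ennreal (X \<omega>) \<partial>M)"
      unfolding EX lN by (rule moment_constants_power(1)[OF mc j(1) lk(2)])
    show "(\<integral>\<^sup>+ \<omega>. ennreal ((X \<omega>)\<^sup>2) \<partial>M) \<le> ennreal (exp (\<gamma>2 * lam d N))"
      unfolding EX lN h_def by (rule moment_constants_power(2)[OF mc j(1) lk(2)])
    show "(\<integral>\<^sup>+ \<omega>. ennreal (Y \<omega>) \<partial>M) \<noteq> \<infinity>"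
      using moment_constantsD(6)[OF mc _ order_refl, of N] j unfolding Y_def Z_def N_def by simp
    have "space M - G = {\<omega>\<in>space M. norm (S N \<omega> - (\<Sum>z\<in>B. S' z \<omega>)) > e * lam d N}"
      unfolding G_def by auto
    then show "measure M (space M - G) \<le> exp (- (2 * \<beta> + \<gamma>2 + 2) * lam d N)"
      using small unfolding N_def B_def by simp
  qed (use XY lN1 in \<open>auto simp: X_def Y_def h_def G_def prod_nonneg\<close>)
  moreover have "ln (enn2real (Z j (lam d k) ^ p)) / lam d N = ln (enn2real (Z j (lam d k))) / lam d k"
    unfolding lN using ln_enn2real_power_div moment_constantsD(6,7)[OF mc j(1) lk(2)] p by simp
  ultimately show ?thesis unfolding EX pressure_def Y_def Z_def N_def by simp
qed

lemma pressure_superadditive: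
  fixes S' :: "nat \<Rightarrow> ('d::finite \<Rightarrow> int) \<Rightarrow> 'a \<Rightarrow> 'v"
  assumes conc: "concave_on UNIV f" and d: "d = CARD('d)"
    and S': "\<And>n. indep_vars (\<lambda>_. borel) (S' n) UNIV \<and> (\<forall>z. distr M borel (S' n z) = distr M borel (S n))"
    and nearly_additive: "\<forall>\<epsilon>>0. \<forall>C>0. \<exists>K::nat. K > r \<and> (\<forall>k\<ge>K. \<forall>m\<ge>1.
           measure M {\<omega>\<in>space M. norm (S ((2*m+1)*k) \<omega> - (\<Sum>z\<in>box_pts m. S' (k - r) z \<omega>))
                > \<epsilon> * lam d ((2*m+1)*k)} \<le> exp (- C * lam d ((2*m+1)*k)))"
    and \<epsilon>: "\<epsilon> > 0"
  shows "\<exists>K>r. \<forall>k\<ge>K. \<forall>m\<ge>1. ln (enn2real (Z (k - r) (lam d k))) / lam d k - \<epsilon> \<le> pressure ((2 * m + 1) * k)"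
proof -
  obtain \<beta> \<gamma>1 \<gamma>2 where mc: "moment_constants \<beta> \<gamma>1 \<gamma>2" using moment_constants_exist by blast
  define e where "e = \<epsilon> / (2 * (L + 1))"
  have e: "e > 0" "L * e \<le> \<epsilon> / 2" unfolding e_def using \<epsilon> L_nonneg by (simp_all add: field_simps)
  have "2 * \<beta> + \<gamma>2 + 2 > 0" using moment_constantsD(1,3)[OF mc] by simp
  from nearly_additive[rule_format, OF e(1) this] obtain K1 where K1: "K1 > r" and small: "\<forall>k\<ge>K1. \<forall>m\<ge>1.
      measure M {\<omega>\<in>space M. norm (S ((2*m+1)*k) \<omega> - (\<Sum>z\<in>box_pts m. S' (k - r) z \<omega>))
        > e * lam d ((2*m+1)*k)} \<le> exp (- (2 * \<beta> + \<gamma>2 + 2) * lam d ((2*m+1)*k))"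
    by (elim exE conjE)
  have "eventually (\<lambda>k. ln 2 / lam d k < \<epsilon> / 2) sequentially"
    using \<epsilon> by (intro order_tendstoD(2)[OF tendsto_divide_lam_0[OF d_ge_1 filterlim_ident]]) auto
  then obtain K2 where K2: "\<And>k. k \<ge> K2 \<Longrightarrow> ln 2 / lam d k < \<epsilon> / 2"
    unfolding eventually_sequentially by blast
  have "ln (enn2real (Z (k - r) (lam d k))) / lam d k - \<epsilon> \<le> pressure ((2 * m + 1) * k)"
    if k: "k \<ge> max K1 K2" and m: "m \<ge> 1" for k m
  proof -
    have j: "1 \<le> k - r" "k - r \<le> k" using k K1 by auto
    have "ln (enn2real (Z (k - r) (lam d k))) / lam d k - L * e - ln 2 / lam d ((2 * m + 1) * k)
        \<le> pressure ((2 * m + 1) * k)"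
    proof (rule pressure_block_lower[OF mc conc _ _ d j])
      show "measure M {\<omega>\<in>space M. norm (S ((2 * m + 1) * k) \<omega> - (\<Sum>z\<in>box_pts m. S' (k - r) z \<omega>))
          > e * lam d ((2 * m + 1) * k)} \<le> exp (- (2 * \<beta> + \<gamma>2 + 2) * lam d ((2 * m + 1) * k))"
        using small k m by simp
    qed (use S' in blast)+
    moreover have "ln 2 / lam d ((2 * m + 1) * k) \<le> ln 2 / lam d k"
      using lam_pos[of k d] lam_mono[of k "(2 * m + 1) * k" d] k K1 by (intro divide_left_mono) auto
    ultimately show ?thesis using K2[of k] k e(2) by linarith
  qed
  moreover have "max K1 K2 > r" using K1 by simp
  ultimately show ?thesis by blast
qed

lemma pressure_almost_increasing:
  assumes reg: "exp_regular M S d" and nadd: "exp_nearly_additive M S TYPE('d::finite)"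
    and d: "d = CARD('d)" and conc: "concave_on UNIV f" and \<epsilon>: "\<epsilon> > 0"
  shows "\<exists>J. \<forall>j\<ge>J. \<exists>N. \<forall>n\<ge>N. pressure j - \<epsilon> \<le> pressure n"
proof -
  from nadd[unfolded exp_nearly_additive_def, folded d]
  obtain r and S' :: "nat \<Rightarrow> ('d \<Rightarrow> int) \<Rightarrow> 'a \<Rightarrow> 'v" where
    S': "\<And>n. indep_vars (\<lambda>_. borel) (S' n) UNIV \<and> (\<forall>z. distr M borel (S' n z) = distr M borel (S n))"
    and nearly_additive: "\<forall>\<epsilon>>0. \<forall>C>0. \<exists>K::nat. K > r \<and> (\<forall>k\<ge>K. \<forall>m\<ge>1.
           measure M {\<omega>\<in>space M. norm (S ((2*m+1)*k) \<omega> - (\<Sum>z\<in>box_pts m. S' (k - r) z \<omega>))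
                > \<epsilon> * lam d ((2*m+1)*k)} \<le> exp (- C * lam d ((2*m+1)*k)))"
    by blast
  have \<epsilon>3: "\<epsilon> / 3 > 0" using \<epsilon> by simp
  obtain KA where KA: "KA > r" and superadd: "\<And>k m. k \<ge> KA \<Longrightarrow> m \<ge> 1 \<Longrightarrow>
      ln (enn2real (Z (k - r) (lam d k))) / lam d k - \<epsilon> / 3 \<le> pressure ((2 * m + 1) * k)"
    using pressure_superadditive[OF conc d S' nearly_additive \<epsilon>3] by blast
  obtain JC where larger: "\<And>j. j \<ge> JC \<Longrightarrow> pressure j - \<epsilon> / 3 \<le> ln (enn2real (Z j (lam d (j + r)))) / lam d (j + r)"
    using pressure_larger_volume[OF \<epsilon>3, of r] by blast
  have "\<exists>N. \<forall>n\<ge>N. pressure j - \<epsilon> \<le> pressure n" if j: "j \<ge> max KA JC" for j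
  proof -
    define k where "k = j + r"
    have k: "k \<ge> 1" "k \<ge> KA" "k - r = j" using j KA unfolding k_def by auto
    obtain NB where regular: "\<And>n. n \<ge> NB \<Longrightarrow> pressure ((2 * block_index k n + 1) * k) - \<epsilon> / 3 \<le> pressure n"
      using pressure_regular[OF reg k(1) \<epsilon>3] by blast
    have "pressure j - \<epsilon> \<le> pressure n" if n: "n \<ge> max NB (3 * k)" for n
    proof -
      have "3 * k div k \<le> n div k" using n by (intro div_le_mono) simp
      then have "3 \<le> n div k" using k(1) by simp
      then have "block_index k n \<ge> 1" unfolding block_index_def by simp
      moreover have "NB \<le> n" "JC \<le> j" using n j by auto
      ultimately show ?thesis
        using superadd[OF k(2)] regular[of n] larger[of j] unfolding k(3) k_def[symmetric] by fastforce
    qed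
    then show ?thesis by blast
  qed
  then show ?thesis by blast
qed

lemma Gamma_tendsto:
  assumes "exp_regular M S d" "exp_nearly_additive M S TYPE('d::finite)" "d = CARD('d)" "concave_on UNIV f"
  shows "\<exists>G. G \<noteq> \<infinity> \<and> (\<lambda>n. Gamma M d S n f / ereal (lam d n)) \<longlonglongrightarrow> G"
proof -
  obtain \<beta> \<gamma>1 \<gamma>2 where mc: "moment_constants \<beta> \<gamma>1 \<gamma>2" using moment_constants_exist by blast
  have "eventually (\<lambda>n. pressure n \<le> \<gamma>1) sequentially"
    using pressure_le[OF mc] by (intro eventually_sequentiallyI[of 1])
  then obtain G where "G \<noteq> \<infinity>" "(\<lambda>n. ereal (pressure n)) \<longlonglongrightarrow> G"
    using ereal_tendsto_of_almost_increasing[OF pressure_almost_increasing[OF assms]] by blast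
  moreover have "eventually (\<lambda>n. ereal (pressure n) = Gamma M d S n f / ereal (lam d n)) sequentially"
    using Gamma_eq_pressure by (intro eventually_sequentiallyI[of 1]) simp
  ultimately show ?thesis by (blast intro: Lim_transform_eventually)
qed

end

theorem mainTheorem7:
  fixes M :: "'a measure" and S :: "nat \<Rightarrow> 'a \<Rightarrow> 'v::euclidean_space"
  assumes "prob_space M"
    and "\<And>n. S n \<in> borel_measurable M"
    and "exp_regular M S CARD('d::finite)"
    and "exp_nearly_additive M S TYPE('d)"
    and "\<And>l. \<exists>B::real. \<forall>n\<ge>1.
            lnEnn (\<integral>\<^sup>+ \<omega>. ennreal (exp (l \<bullet> S n \<omega>)) \<partial>M) / ereal (lam CARD('d) n) \<le> ereal B"
  shows "exp_tight M S CARD('d)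
    \<and> (\<forall>f :: 'v \<Rightarrow> real. (\<exists>L. L-lipschitz_on UNIV f) \<and> concave_on UNIV f \<longrightarrow>
         (\<exists>G::ereal. G \<noteq> \<infinity> \<and>
            (\<lambda>n. Gamma M CARD('d) S n f / ereal (lam CARD('d) n)) \<longlonglongrightarrow> G))"
proof -
  interpret exp_moment_process M S "CARD('d)"
    using assms(1,2,5) by (intro exp_moment_process.intro exp_moment_process_axioms.intro) auto
  have "\<exists>G::ereal. G \<noteq> \<infinity> \<and> (\<lambda>n. Gamma M CARD('d) S n f / ereal (lam CARD('d) n)) \<longlonglongrightarrow> G"
    if "L-lipschitz_on UNIV f" "concave_on UNIV f" for f :: "'v \<Rightarrow> real" and L
  proof -
    interpret lipschitz_functional M S "CARD('d)" f L
      using that(1) by unfold_locales (simp_all add: Suc_le_eq)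
    show ?thesis by (rule Gamma_tendsto[OF assms(3,4) refl that(2)])
  qed
  then show ?thesis using exp_tight by blast
qed

end
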